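(* There exists a family $(F_n)_{n\in\mathbb{N}}$ of CNF formulas such that each $F_n$ can be represented by a TDD of size polynomial in $n$, while every OBDD representing $F_n$ has size at least $n^{c\log n}$, for some constant $c>0$.
   Context: A CNF formula is a conjunction of clauses (disjunctions of literals). An OBDD over $X$ is a directed acyclic graph with a unique source, sinks labeled $0$ or $1$, and decision nodes labeled by variables with two outgoing edges labeled $0,1$, such that along every path the tested variables respect a fixed order of $X$; it accepts $\tau$ iff following the edges labeled by $\tau$ from the source reaches a $1$-sink. A vtree over $X$ is a rooted tree whose internal nodes have exactly two ordered children and whose leaves are labeled bijectively by $X$; $X_t$ is the set of variables below node $t$. An nTDD $C=(N,E)$ respecting $T$ has nodes $N=\biguplus_t N_t$ ($t$-nodes); leaf $t$-nodes (leaf labeled $x$) carry a label in $\{x,\neg x,1,0\}$ and compute that literal/constant; an internal $t$-node $g$ with children $t_1,t_2$ has inputs $E(g)\subseteq N_{t_1}\times N_{t_2}$ and computes $f_g=\bigvee_{(g_1,g_2)\in E(g)}(f_{g_1}\wedge f_{g_2})$ over $X_t$; the root-node $\mathrm{out}$ gives the computed function. Size $|C|=\sum_g|E(g)|$. A TDD is an nTDD such that for every leaf $t$ labeled $x$, $N_t$ has at most one node labeled $x$, at most one labeled $\neg x$, at most one labeled $1$, and if one is labeled $1$ all others are labeled $0$; and for every internal $t$, distinct $t$-nodes have disjoint input sets. *)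

theory Defs
  imports Complex_Main
begin

type_synonym var = nat
type_synonym assignment = "var \<Rightarrow> bool"

text \<open>A literal is a pair (x, b): positive literal x if b = True, negative literal if b = False.
  A clause is a list of literals (their disjunction), a CNF a list of clauses (their conjunction).\<close>
type_synonym lit = "var \<times> bool"
type_synonym clause = "lit list"
type_synonym cnf = "clause list"

definition cnf_sem :: "cnf \<Rightarrow> assignment \<Rightarrow> bool" where
  "cnf_sem F \<tau> \<longleftrightarrow> (\<forall>C\<in>set F. \<exists>(x, b)\<in>set C. \<tau> x = b)"

definition cnf_vars :: "cnf \<Rightarrow> var set" where
  "cnf_vars F = (\<Union>C\<in>set F. fst ` set C)"

datatype obdd_label = Sink bool | Dec var nat nat  \<comment> \<open>Dec x lo hi: test x, 0-edge to lo, 1-edge to hi\<close>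

record obdd =
  bnodes :: "nat set"
  bsrc :: nat
  blab :: "nat \<Rightarrow> obdd_label"

definition obdd_edge :: "obdd \<Rightarrow> nat \<Rightarrow> nat \<Rightarrow> bool" where
  "obdd_edge B u v \<longleftrightarrow> u \<in> bnodes B \<and>
     (\<exists>x l h. blab B u = Dec x l h \<and> (v = l \<or> v = h))"

text \<open>Variable order on X given by an injective rank function r (x before y iff r x < r y); every decision node tests a variable strictly
  earlier in the order than any variable tested by its children (hence along every path the
  tested variables respect the order, and the graph is acyclic).\<close>
definition obdd_below :: "(var \<Rightarrow> nat) \<Rightarrow> obdd \<Rightarrow> var \<Rightarrow> nat \<Rightarrow> bool" where
  "obdd_below ord B x v \<longleftrightarrow>
     (case blab B v of Sink _ \<Rightarrow> True | Dec y _ _ \<Rightarrow> ord x < ord y)"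

definition is_obdd :: "obdd \<Rightarrow> var set \<Rightarrow> bool" where
  "is_obdd B X \<longleftrightarrow>
     finite (bnodes B) \<and> bsrc B \<in> bnodes B \<and>
     (\<forall>v\<in>bnodes B. (obdd_edge B)\<^sup>*\<^sup>* (bsrc B) v) \<and>
     (\<exists>ord. inj_on ord X \<and>
        (\<forall>u\<in>bnodes B. case blab B u of
            Sink _ \<Rightarrow> True
          | Dec x l h \<Rightarrow> x \<in> X \<and> l \<in> bnodes B \<and> h \<in> bnodes B \<and>
                         obdd_below ord B x l \<and> obdd_below ord B x h))"

definition obdd_step :: "obdd \<Rightarrow> assignment \<Rightarrow> nat \<Rightarrow> nat \<Rightarrow> bool" where
  "obdd_step B \<tau> u v \<longleftrightarrow>
     (\<exists>x l h. blab B u = Dec x l h \<and> v = (if \<tau> x then h else l))"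

definition obdd_accepts :: "obdd \<Rightarrow> assignment \<Rightarrow> bool" where
  "obdd_accepts B \<tau> \<longleftrightarrow>
     (\<exists>v. (obdd_step B \<tau>)\<^sup>*\<^sup>* (bsrc B) v \<and> blab B v = Sink True)"

definition obdd_size :: "obdd \<Rightarrow> nat" where
  "obdd_size B = card (bnodes B)"

datatype vtree = VLeaf var | VNode vtree vtree

fun vt_leaves :: "vtree \<Rightarrow> var list" where
  "vt_leaves (VLeaf x) = [x]"
| "vt_leaves (VNode t1 t2) = vt_leaves t1 @ vt_leaves t2"

fun vt_subtrees :: "vtree \<Rightarrow> vtree set" where
  "vt_subtrees (VLeaf x) = {VLeaf x}"
| "vt_subtrees (VNode t1 t2) = insert (VNode t1 t2) (vt_subtrees t1 \<union> vt_subtrees t2)"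

text \<open>Vtree over X: leaves labelled bijectively by X. Since leaf labels are distinct,
  nodes of the vtree are identified with the subtrees rooted at them.\<close>
definition vtree_over :: "vtree \<Rightarrow> var set \<Rightarrow> bool" where
  "vtree_over T X \<longleftrightarrow> distinct (vt_leaves T) \<and> set (vt_leaves T) = X"

text \<open>Labels of leaf t-nodes (leaf t labelled x): LPos = x, LNeg = \<not>x, LConst b = constant b.\<close>
datatype leaf_label = LPos | LNeg | LConst bool

record tdd =
  tnodes :: "nat set"
  tvt :: "nat \<Rightarrow> vtree"                 \<comment> \<open>g is a t-node iff tvt g = t\<close>
  tlab :: "nat \<Rightarrow> leaf_label"
  tin :: "nat \<Rightarrow> (nat \<times> nat) set"
  tout :: nat

definition is_ntdd :: "tdd \<Rightarrow> vtree \<Rightarrow> bool" where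
  "is_ntdd C T \<longleftrightarrow>
     finite (tnodes C) \<and> tout C \<in> tnodes C \<and> tvt C (tout C) = T \<and>
     (\<forall>g\<in>tnodes C. tvt C g \<in> vt_subtrees T) \<and>
     (\<forall>g\<in>tnodes C. case tvt C g of
         VLeaf x \<Rightarrow> tin C g = {}
       | VNode t1 t2 \<Rightarrow> tin C g \<subseteq> {(g1, g2). g1 \<in> tnodes C \<and> g2 \<in> tnodes C \<and>
                                        tvt C g1 = t1 \<and> tvt C g2 = t2})"

definition is_tdd :: "tdd \<Rightarrow> vtree \<Rightarrow> bool" where
  "is_tdd C T \<longleftrightarrow> is_ntdd C T \<and>
     (\<forall>x g g'. g \<in> tnodes C \<and> g' \<in> tnodes C \<and> tvt C g = VLeaf x \<and> tvt C g' = VLeaf x \<longrightarrow>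
        (tlab C g = LPos \<and> tlab C g' = LPos \<longrightarrow> g = g') \<and>
        (tlab C g = LNeg \<and> tlab C g' = LNeg \<longrightarrow> g = g') \<and>
        (tlab C g = LConst True \<and> tlab C g' = LConst True \<longrightarrow> g = g') \<and>
        (tlab C g = LConst True \<and> g' \<noteq> g \<longrightarrow> tlab C g' = LConst False)) \<and>
     (\<forall>t1 t2 g g'. g \<in> tnodes C \<and> g' \<in> tnodes C \<and> tvt C g = VNode t1 t2 \<and>
        tvt C g' = VNode t1 t2 \<and> g \<noteq> g' \<longrightarrow> tin C g \<inter> tin C g' = {})"

fun tdd_eval :: "tdd \<Rightarrow> vtree \<Rightarrow> nat \<Rightarrow> assignment \<Rightarrow> bool" where
  "tdd_eval C (VLeaf x) g \<tau> =
     (case tlab C g of LPos \<Rightarrow> \<tau> x | LNeg \<Rightarrow> \<not> \<tau> x | LConst b \<Rightarrow> b)"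
| "tdd_eval C (VNode t1 t2) g \<tau> =
     (\<exists>(g1, g2)\<in>tin C g. tdd_eval C t1 g1 \<tau> \<and> tdd_eval C t2 g2 \<tau>)"

definition tdd_computes :: "tdd \<Rightarrow> vtree \<Rightarrow> assignment \<Rightarrow> bool" where
  "tdd_computes C T \<tau> = tdd_eval C T (tout C) \<tau>"

definition tdd_size :: "tdd \<Rightarrow> nat" where
  "tdd_size C = (\<Sum>g\<in>tnodes C. card (tin C g))"

end

(*
  The formulas are edge CNFs of trees of cliques: take the complete ternary tree of depth D,
  replace every node by a K-clique and join copy i of a node to copy i of each child; every
  edge uv gives the clause x_u | x_v | s_uv.

  Upper bound: along a vtree that follows the tree, the variables of a subtree meet the rest of
  the formula only in the O(K) variables at its root (the vertex variables and the edge variables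
  to the parent). A TDD node may therefore record which crossing clauses are already satisfied,
  giving width 2^O(K) and size poly(3^D, 2^K).

  Lower bound: for every variable order some cut is crossed by a matching of (K/2) D graph edges.
  This follows by induction on D: take the child subtree whose cut threshold is the median of the
  three, and add K/2 crossing edges found greedily in the rest, which stays connected after
  removing fewer than K vertices. With the matched edge variables false, the formula restricted
  to the matching is a disjointness test, so the OBDD needs 2^((K/2) D) nodes.

  For K = 2 (log n + 1) and D = log n this is polynomial against n^(log n / 2).
*)

theory Submission
  imports Defs "HOL-Library.Countable" "HOL-Library.List_Lexorder" "HOL-Library.Product_Lexorder"
    "HOL-Library.Discrete_Functions"
begin

section \<open>Trees of cliques\<close>

type_synonym vertex = "nat list \<times> nat"

definition addrs :: "nat \<Rightarrow> nat list set" where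
  "addrs D = {w. length w \<le> D \<and> (\<forall>a\<in>set w. a < 3)}"

text \<open>The vertex (w, i) is copy i of the node with address w in the complete ternary tree of
  depth D.\<close>

definition vertices :: "nat \<Rightarrow> nat \<Rightarrow> vertex set" where
  "vertices K D = addrs D \<times> {..<K}"

definition adjacent :: "vertex \<Rightarrow> vertex \<Rightarrow> bool" where
  "adjacent u v \<longleftrightarrow> (fst u = fst v \<and> snd u \<noteq> snd v) \<or>
     (snd u = snd v \<and> (\<exists>a<3. fst v = fst u @ [a] \<or> fst u = fst v @ [a]))"

definition graph_edges :: "nat \<Rightarrow> nat \<Rightarrow> (vertex \<times> vertex) set" where
  "graph_edges K D = {(u, v). u \<in> vertices K D \<and> v \<in> vertices K D \<and>
     ((fst u = fst v \<and> snd u < snd v) \<or> (snd u = snd v \<and> (\<exists>a<3. fst v = fst u @ [a])))}"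

lemma adjacent_sym: "adjacent u v \<Longrightarrow> adjacent v u"
  unfolding adjacent_def by auto

lemma adjacent_graph_edges:
  "u \<in> vertices K D \<Longrightarrow> v \<in> vertices K D \<Longrightarrow> adjacent u v \<Longrightarrow>
     (u, v) \<in> graph_edges K D \<or> (v, u) \<in> graph_edges K D"
  unfolding adjacent_def graph_edges_def by (auto simp: nat_neq_iff)

lemma addrs_snoc: "w @ [a] \<in> addrs D \<longleftrightarrow> w \<in> addrs D \<and> length w < D \<and> a < 3"
  unfolding addrs_def by auto

lemma addrs_0: "addrs 0 = {[]}"
  unfolding addrs_def by auto

lemma addrs_Suc: "addrs (Suc D) = insert [] {a # u | a u. a < 3 \<and> u \<in> addrs D}"
  unfolding addrs_def
  by (auto simp: length_Suc_conv) (metis length_Cons list.set_intros Suc_le_mono list.exhaust list.set_cases)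

lemma finite_addrs: "finite (addrs D)"
proof -
  have "addrs D = {w. set w \<subseteq> {..<3} \<and> length w \<le> D}" unfolding addrs_def by auto
  then show ?thesis by (simp add: finite_lists_length_le)
qed

lemma card_addrs: "card (addrs D) \<le> (D + 1) * 3 ^ D"
proof -
  have "addrs D = {w. set w \<subseteq> {..<3} \<and> length w \<le> D}" unfolding addrs_def by auto
  then have "card (addrs D) = (\<Sum>i\<le>D. 3 ^ i)" by (simp add: card_lists_length_le)
  also have "\<dots> \<le> (\<Sum>i\<le>D. (3::nat) ^ D)" by (intro sum_mono power_increasing) auto
  finally show ?thesis by simp
qed

lemma finite_vertices: "finite (vertices K D)"
  unfolding vertices_def using finite_addrs by simp

lemma card_vertices: "card (vertices K D) \<le> K * ((D + 1) * 3 ^ D)"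
  unfolding vertices_def using card_addrs[of D] by (simp add: card_cartesian_product)

lemma finite_graph_edges: "finite (graph_edges K D)"
proof -
  have "graph_edges K D \<subseteq> vertices K D \<times> vertices K D" unfolding graph_edges_def by auto
  then show ?thesis using finite_vertices by (meson finite_SigmaI finite_subset)
qed

section \<open>Matchings across a cut\<close>

definition rooted_subtree :: "nat list set \<Rightarrow> bool" where
  "rooted_subtree W \<longleftrightarrow> [] \<in> W \<and> (\<forall>w a. w @ [a] \<in> W \<longrightarrow> w \<in> W) \<and> (\<forall>w\<in>W. \<forall>a\<in>set w. a < 3)"

definition crossing_matching ::
    "(vertex \<Rightarrow> nat) \<Rightarrow> nat \<Rightarrow> vertex set \<Rightarrow> (vertex \<times> vertex) set \<Rightarrow> bool" where
  "crossing_matching ord \<theta> A P \<longleftrightarrow> finite P \<and> inj_on fst P \<and> inj_on snd P \<and>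
     (\<forall>(u, v)\<in>P. u \<in> A \<and> v \<in> A \<and> adjacent u v \<and> ord u < \<theta> \<and> \<theta> \<le> ord v)"

lemma crossing_matching_mono:
  "crossing_matching ord \<theta> A P \<Longrightarrow> A \<subseteq> B \<Longrightarrow> crossing_matching ord \<theta> B P"
  unfolding crossing_matching_def by blast

lemma crossing_matching_Un:
  assumes P: "crossing_matching ord \<theta> A P" and P': "crossing_matching ord \<theta> A' P'"
    and disj: "A \<inter> A' = {}"
  shows "crossing_matching ord \<theta> (A \<union> A') (P \<union> P')" and "card (P \<union> P') = card P + card P'"
proof -
  have "fst ` P \<inter> fst ` P' = {}" "snd ` P \<inter> snd ` P' = {}" "P \<inter> P' = {}"
    using P P' disj unfolding crossing_matching_def by fastforce+
  then show "crossing_matching ord \<theta> (A \<union> A') (P \<union> P')"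
    using P P' unfolding crossing_matching_def by (auto simp: inj_on_Un)
  show "card (P \<union> P') = card P + card P'"
    using P P' \<open>P \<inter> P' = {}\<close> unfolding crossing_matching_def by (simp add: card_Un_disjoint)
qed

lemma crossing_matching_image:
  assumes P: "crossing_matching (ord \<circ> f) \<theta> A P" and f: "inj f"
    and adj: "\<And>u v. adjacent (f u) (f v) \<longleftrightarrow> adjacent u v"
  shows "crossing_matching ord \<theta> (f ` A) (map_prod f f ` P)" and "card (map_prod f f ` P) = card P"
proof -
  have "inj (map_prod f f)" using f by (simp add: prod.inj_map)
  then show "card (map_prod f f ` P) = card P" by (simp add: card_image inj_on_subset)
  have "inj_on (f \<circ> fst) P" "inj_on (f \<circ> snd) P"
    using P inj_on_subset[OF f] unfolding crossing_matching_def by (auto intro: comp_inj_on)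
  then have "inj_on fst (map_prod f f ` P)" "inj_on snd (map_prod f f ` P)"
    by (simp_all add: inj_on_imageI)
  moreover have "u \<in> f ` A \<and> v \<in> f ` A \<and> adjacent u v \<and> ord u < \<theta> \<and> \<theta> \<le> ord v"
    if uv: "(u, v) \<in> map_prod f f ` P" for u v
  proof -
    obtain e where e: "e \<in> P" "(u, v) = map_prod f f e" using uv unfolding image_iff by blast
    then show ?thesis using P adj unfolding crossing_matching_def by (cases e) auto
  qed
  ultimately show "crossing_matching ord \<theta> (f ` A) (map_prod f f ` P)"
    using P unfolding crossing_matching_def by blast
qed

text \<open>If fewer than K vertices are removed, some column W \<times> {i} survives. It is connected by the
  tree edges, and every other surviving vertex lies in the clique of one of its vertices, so the
  surviving graph is connected and contains an edge across the cut.\<close>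

lemma crossing_edge_exists:
  fixes ord :: "vertex \<Rightarrow> nat"
  assumes W: "rooted_subtree W" and C: "finite C" "card C < K"
    and u: "u \<in> W \<times> {..<K} - C" "ord u < \<theta>" and v: "v \<in> W \<times> {..<K} - C" "\<theta> \<le> ord v"
  shows "\<exists>p q. p \<in> W \<times> {..<K} - C \<and> q \<in> W \<times> {..<K} - C \<and> adjacent p q \<and>
    ord p < \<theta> \<and> \<theta> \<le> ord q"
proof (rule ccontr)
  let ?A = "W \<times> {..<K} - C"
  assume no_edge: "\<not> ?thesis"
  have same_side: "ord p < \<theta> \<longleftrightarrow> ord q < \<theta>" if "p \<in> ?A" "q \<in> ?A" "adjacent p q" for p q
  proof (rule ccontr)
    assume "\<not> (ord p < \<theta> \<longleftrightarrow> ord q < \<theta>)"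
    then have "(ord p < \<theta> \<and> \<theta> \<le> ord q) \<or> (ord q < \<theta> \<and> \<theta> \<le> ord p)" by auto
    then show False using that adjacent_sym[OF that(3)] no_edge by blast
  qed
  have "\<not> {..<K} \<subseteq> snd ` C"
  proof
    assume "{..<K} \<subseteq> snd ` C"
    then have "K \<le> card (snd ` C)" using C(1) card_mono[of "snd ` C" "{..<K}"] by simp
    then show False using card_image_le[OF C(1), of snd] C(2) by simp
  qed
  then obtain i where i: "i < K" "i \<notin> snd ` C" by auto
  have column: "(w, i) \<in> ?A" if "w \<in> W" for w
    using that i by force
  have column_side: "ord (w, i) < \<theta> \<longleftrightarrow> ord ([], i) < \<theta>" if "w \<in> W" for w
    using that
  proof (induction w rule: rev_induct)
    case (snoc a w)
    have "w \<in> W" "a < 3" using W snoc.prems unfolding rooted_subtree_def by auto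
    then have "adjacent (w, i) (w @ [a], i)" unfolding adjacent_def by auto
    then show ?case using same_side column snoc \<open>w \<in> W\<close> by blast
  qed simp
  have "ord p < \<theta> \<longleftrightarrow> ord ([], i) < \<theta>" if p: "p \<in> ?A" for p
  proof -
    obtain w j where pw: "p = (w, j)" "w \<in> W" using p by auto
    have "ord p < \<theta> \<longleftrightarrow> ord (w, i) < \<theta>"
      using same_side[OF p column[OF pw(2)]] pw unfolding adjacent_def by (cases "j = i") auto
    then show ?thesis using column_side[OF pw(2)] by simp
  qed
  then show False using u v by (meson not_le)
qed

lemma crossing_matching_greedy:
  assumes W: "rooted_subtree W" "finite W"
  shows "finite C \<Longrightarrow> card C + 2 * j < K + 2 \<Longrightarrow>
    j \<le> card {x \<in> W \<times> {..<K} - C. ord x < \<theta>} \<Longrightarrow> j \<le> card {x \<in> W \<times> {..<K} - C. \<theta> \<le> ord x} \<Longrightarrow>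
    \<exists>P. crossing_matching ord \<theta> (W \<times> {..<K} - C) P \<and> card P = j"
proof (induction j arbitrary: C)
  case 0
  show ?case by (intro exI[of _ "{}"]) (simp add: crossing_matching_def)
next
  case (Suc j)
  let ?A = "W \<times> {..<K}"
  have fin: "finite {x \<in> ?A - C. ord x < \<theta>}" "finite {x \<in> ?A - C. \<theta> \<le> ord x}"
    using W(2) by auto
  obtain u where u: "u \<in> ?A - C" "ord u < \<theta>"
    using Suc.prems(3) card.empty by (metis (no_types, lifting) Collect_empty_eq not_less_eq_eq zero_le)
  obtain v where v: "v \<in> ?A - C" "\<theta> \<le> ord v"
    using Suc.prems(4) card.empty by (metis (no_types, lifting) Collect_empty_eq not_less_eq_eq zero_le)
  obtain p q where pq: "p \<in> ?A - C" "q \<in> ?A - C" "adjacent p q" "ord p < \<theta>" "\<theta> \<le> ord q"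
    using crossing_edge_exists[OF W(1) Suc.prems(1) _ u v] Suc.prems(2) by fastforce
  define C' where "C' = insert p (insert q C)"
  have "card C' \<le> card C + 2"
    unfolding C'_def using Suc.prems(1) by (simp add: card_insert_if)
  moreover have "{x \<in> ?A - C'. ord x < \<theta>} = {x \<in> ?A - C. ord x < \<theta>} - {p}"
    "{x \<in> ?A - C'. \<theta> \<le> ord x} = {x \<in> ?A - C. \<theta> \<le> ord x} - {q}"
    unfolding C'_def using pq by auto
  ultimately obtain P where P: "crossing_matching ord \<theta> (?A - C') P" "card P = j"
    using Suc.IH[of C'] Suc.prems fin pq unfolding C'_def by (force simp: card_Diff_singleton)
  have pair: "crossing_matching ord \<theta> {p, q} {(p, q)}"
    using pq unfolding crossing_matching_def by simp
  have disj: "{p, q} \<inter> (?A - C') = {}" unfolding C'_def by auto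
  have "{p, q} \<union> (?A - C') \<subseteq> ?A - C" using pq unfolding C'_def by auto
  then have "crossing_matching ord \<theta> (?A - C) ({(p, q)} \<union> P)"
    by (rule crossing_matching_mono[OF crossing_matching_Un(1)[OF pair P(1) disj]])
  moreover have "card ({(p, q)} \<union> P) = Suc j"
    using crossing_matching_Un(2)[OF pair P(1) disj] P(2) by simp
  ultimately show ?case by blast
qed

lemma threshold_with_card:
  fixes ord :: "'a \<Rightarrow> nat"
  assumes V: "finite V" "inj_on ord V" and m: "m \<le> card V"
  shows "\<exists>\<theta>. card {v \<in> V. ord v < \<theta>} = m"
proof -
  define f where "f t = int (card {v \<in> V. ord v < t})" for t
  have "\<bar>f (t + 1) - f t\<bar> \<le> 1" for t
  proof -
    have "{v \<in> V. ord v < t + 1} = {v \<in> V. ord v < t} \<union> {v \<in> V. ord v = t}" by auto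
    then have "card {v \<in> V. ord v < t + 1} \<le> card {v \<in> V. ord v < t} + card {v \<in> V. ord v = t}"
      by (simp add: card_Un_le)
    moreover have "card {v \<in> V. ord v = t} \<le> 1"
      using V by (auto simp: card_le_Suc0_iff_eq dest: inj_onD)
    ultimately have "card {v \<in> V. ord v < t + 1} \<le> card {v \<in> V. ord v < t} + 1"
      by linarith
    moreover have "card {v \<in> V. ord v < t} \<le> card {v \<in> V. ord v < t + 1}"
      using V(1) by (intro card_mono) auto
    ultimately show ?thesis unfolding f_def by linarith
  qed
  moreover have "{v \<in> V. ord v < Suc (Max (insert 0 (ord ` V)))} = V"
    using V(1) by (auto simp: le_imp_less_Suc)
  ultimately obtain \<theta> where "f \<theta> = int m"
    using nat0_intermed_int_val[of "Suc (Max (insert 0 (ord ` V)))" f "int m"] m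
    unfolding f_def by auto
  then show ?thesis unfolding f_def by auto
qed

definition in_child :: "nat \<Rightarrow> vertex \<Rightarrow> vertex" where
  "in_child a v = (a # fst v, snd v)"

lemma inj_in_child: "inj (in_child a)"
  unfolding in_child_def by (intro injI) (auto simp: prod_eq_iff)

lemma adjacent_in_child: "adjacent (in_child a u) (in_child a v) \<longleftrightarrow> adjacent u v"
  unfolding in_child_def adjacent_def by auto

lemma in_child_vertices: "a < 3 \<Longrightarrow> in_child a ` vertices K D \<subseteq> vertices K (Suc D)"
  unfolding in_child_def vertices_def addrs_def by auto

lemma card_in_child_le:
  assumes "in_child a ` {v \<in> vertices K D. R (in_child a v)} \<subseteq> S" "finite S"
  shows "card {v \<in> vertices K D. R (in_child a v)} \<le> card S"
  using card_inj_on_le[OF inj_on_subset[OF inj_in_child] assms] by simp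

text \<open>Induction step: the matching from child b is extended by m edges crossing the cut inside the
  root clique and the other two subtrees, found greedily; child a supplies m vertices before the cut
  and child c supplies m vertices after it.\<close>

lemma crossing_matching_extend:
  assumes abc: "a < 3" "b < 3" "c < 3" "a \<noteq> b" "c \<noteq> b" and th: "\<theta>\<^sub>a \<le> \<theta>" "\<theta> \<le> \<theta>\<^sub>c"
    and P: "crossing_matching (ord \<circ> in_child b) \<theta> (vertices (2 * m) D) P"
    and below: "m \<le> card {v \<in> vertices (2 * m) D. ord (in_child a v) < \<theta>\<^sub>a}"
    and above: "m \<le> card {v \<in> vertices (2 * m) D. \<theta>\<^sub>c \<le> ord (in_child c v)}"
  shows "\<exists>P'. crossing_matching ord \<theta> (vertices (2 * m) (Suc D)) P' \<and> card P' = card P + m"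
proof -
  let ?K = "2 * m"
  define W where "W = {w \<in> addrs (Suc D). w = [] \<or> hd w \<noteq> b}"
  have "W \<subseteq> addrs (Suc D)" unfolding W_def by auto
  then have W: "rooted_subtree W" "finite W"
    using finite_subset[OF _ finite_addrs] unfolding W_def rooted_subtree_def addrs_def
    by (auto simp: hd_append split: if_splits)
  have sub: "W \<times> {..<?K} \<subseteq> vertices ?K (Suc D)"
    unfolding W_def vertices_def by auto
  have fin: "finite (W \<times> {..<?K})" using W(2) by simp
  have child_in_W: "in_child a' ` vertices ?K D \<subseteq> W \<times> {..<?K}" if "a' < 3" "a' \<noteq> b" for a'
    using that unfolding W_def in_child_def vertices_def addrs_def by auto
  have "m \<le> card {x \<in> W \<times> {..<?K} - {}. ord x < \<theta>}"
    using child_in_W[OF abc(1,4)] th(1)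
    by (intro le_trans[OF below card_in_child_le] finite_subset[OF _ fin]) auto
  moreover have "m \<le> card {x \<in> W \<times> {..<?K} - {}. \<theta> \<le> ord x}"
    using child_in_W[OF abc(3,5)] th(2)
    by (intro le_trans[OF above card_in_child_le] finite_subset[OF _ fin]) auto
  ultimately obtain Q where Q: "crossing_matching ord \<theta> (W \<times> {..<?K}) Q" "card Q = m"
    using crossing_matching_greedy[OF W, of "{}" m ?K ord \<theta>] by auto
  have Pb: "crossing_matching ord \<theta> (in_child b ` vertices ?K D) (map_prod (in_child b) (in_child b) ` P)"
    "card (map_prod (in_child b) (in_child b) ` P) = card P"
    using crossing_matching_image[OF P inj_in_child adjacent_in_child] by auto
  have disj: "in_child b ` vertices ?K D \<inter> W \<times> {..<?K} = {}"
    unfolding W_def in_child_def by auto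
  have "in_child b ` vertices ?K D \<union> W \<times> {..<?K} \<subseteq> vertices ?K (Suc D)"
    using in_child_vertices[OF abc(2)] sub by blast
  from crossing_matching_mono[OF crossing_matching_Un(1)[OF Pb(1) Q(1) disj] this]
  show ?thesis using crossing_matching_Un(2)[OF Pb(1) Q(1) disj] Pb(2) Q(2) by auto
qed

lemma median_of_three:
  fixes f :: "nat \<Rightarrow> nat"
  shows "\<exists>a b c. a < 3 \<and> b < 3 \<and> c < 3 \<and> a \<noteq> b \<and> c \<noteq> b \<and> f a \<le> f b \<and> f b \<le> f c"
proof -
  have r: "\<exists>a b c. a < 3 \<and> b < 3 \<and> c < 3 \<and> a \<noteq> b \<and> c \<noteq> b \<and> f a \<le> f b \<and> f b \<le> f c"
    if "a < 3" "b < 3" "c < 3" "a \<noteq> b" "c \<noteq> b" "f a \<le> f b" "f b \<le> f c" for a b c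
    using that by blast
  consider "f 0 \<le> f 1" "f 1 \<le> f 2" | "f 0 \<le> f 2" "f 2 \<le> f 1" | "f 1 \<le> f 0" "f 0 \<le> f 2"
    | "f 1 \<le> f 2" "f 2 \<le> f 0" | "f 2 \<le> f 0" "f 0 \<le> f 1" | "f 2 \<le> f 1" "f 1 \<le> f 0"
    by linarith
  then show ?thesis
    by cases (rule r; simp; fail)+
qed

definition balanced_cut :: "('a \<Rightarrow> nat) \<Rightarrow> 'a set \<Rightarrow> nat \<Rightarrow> nat \<Rightarrow> bool" where
  "balanced_cut ord V m \<theta> \<longleftrightarrow> m \<le> card {v \<in> V. ord v < \<theta>} \<and> m \<le> card {v \<in> V. \<theta> \<le> ord v}"

theorem large_crossing_matching:
  assumes "inj_on ord (vertices (2 * m) D)"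
  shows "\<exists>\<theta> P. crossing_matching ord \<theta> (vertices (2 * m) D) P \<and> m * D \<le> card P \<and>
    balanced_cut ord (vertices (2 * m) D) m \<theta>"
  using assms
proof (induction D arbitrary: ord)
  case 0
  let ?V = "vertices (2 * m) 0"
  have card_V: "card ?V = 2 * m" unfolding vertices_def addrs_0 by (simp add: card_cartesian_product)
  then obtain \<theta> where \<theta>: "card {v \<in> ?V. ord v < \<theta>} = m"
    using threshold_with_card[OF finite_vertices "0.prems", of m] by auto
  have "{v \<in> ?V. \<theta> \<le> ord v} = ?V - {v \<in> ?V. ord v < \<theta>}" by auto
  then have "card {v \<in> ?V. \<theta> \<le> ord v} = m"
    using \<theta> card_V finite_vertices by (simp add: card_Diff_subset)
  then show ?case using \<theta> unfolding balanced_cut_def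
    by (intro exI[of _ \<theta>] exI[of _ "{}"]) (auto simp: crossing_matching_def)
next
  case (Suc D)
  let ?V = "vertices (2 * m) D"
  define good where "good a \<theta> P \<longleftrightarrow> crossing_matching (ord \<circ> in_child a) \<theta> ?V P \<and> m * D \<le> card P \<and>
    balanced_cut (ord \<circ> in_child a) ?V m \<theta>" for a \<theta> P
  have "\<exists>\<theta> P. good a \<theta> P" if "a < 3" for a
  proof -
    have "inj_on (ord \<circ> in_child a) ?V"
      using inj_on_subset[OF inj_in_child subset_UNIV]
        inj_on_subset[OF Suc.prems in_child_vertices[OF that]]
      by (rule comp_inj_on)
    then show ?thesis using Suc.IH unfolding good_def by blast
  qed
  then obtain th P where th: "\<And>a. a < 3 \<Longrightarrow> good a (th a) (P a)"
    by metis
  obtain a b c where abc: "a < 3" "b < 3" "c < 3" "a \<noteq> b" "c \<noteq> b" "th a \<le> th b" "th b \<le> th c"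
    using median_of_three[of th] by blast
  have Pb: "crossing_matching (ord \<circ> in_child b) (th b) ?V (P b)" "m * D \<le> card (P b)"
    "balanced_cut (ord \<circ> in_child b) ?V m (th b)"
    using th[OF abc(2)] unfolding good_def by auto
  obtain P' where P': "crossing_matching ord (th b) (vertices (2 * m) (Suc D)) P'"
    "card P' = card (P b) + m"
    using crossing_matching_extend[OF abc Pb(1)] th[OF abc(1)] th[OF abc(3)]
    unfolding good_def balanced_cut_def by auto
  have sub: "in_child b ` {v \<in> ?V. ord (in_child b v) < th b} \<subseteq> {v \<in> vertices (2 * m) (Suc D). ord v < th b}"
    "in_child b ` {v \<in> ?V. th b \<le> ord (in_child b v)} \<subseteq> {v \<in> vertices (2 * m) (Suc D). th b \<le> ord v}"
    using in_child_vertices[OF abc(2)] by auto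
  have fin: "finite {v \<in> vertices (2 * m) (Suc D). R v}" for R
    using finite_vertices by simp
  have "balanced_cut ord (vertices (2 * m) (Suc D)) m (th b)"
    using Pb(3) le_trans[OF _ card_in_child_le[OF sub(1) fin]] le_trans[OF _ card_in_child_le[OF sub(2) fin]]
    unfolding balanced_cut_def by simp
  then show ?case using P' Pb(2) by (intro exI[of _ "th b"] exI[of _ P']) auto
qed

section \<open>Fooling sets for OBDDs\<close>

definition obdd_ordered :: "obdd \<Rightarrow> (var \<Rightarrow> nat) \<Rightarrow> bool" where
  "obdd_ordered B ord \<longleftrightarrow> (\<forall>u\<in>bnodes B. case blab B u of
     Sink _ \<Rightarrow> True
   | Dec x l h \<Rightarrow> l \<in> bnodes B \<and> h \<in> bnodes B \<and> obdd_below ord B x l \<and> obdd_below ord B x h)"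

lemma is_obdd_obtain_order:
  assumes "is_obdd B X"
  obtains ord where "inj_on ord X" "obdd_ordered B ord"
proof -
  obtain ord where "inj_on ord X" and nodes: "\<forall>u\<in>bnodes B. case blab B u of Sink _ \<Rightarrow> True
      | Dec x l h \<Rightarrow> x \<in> X \<and> l \<in> bnodes B \<and> h \<in> bnodes B \<and> obdd_below ord B x l \<and> obdd_below ord B x h"
    using assms unfolding is_obdd_def by blast
  moreover have "obdd_ordered B ord"
    unfolding obdd_ordered_def
  proof
    fix u assume "u \<in> bnodes B"
    then show "case blab B u of Sink _ \<Rightarrow> True
      | Dec x l h \<Rightarrow> l \<in> bnodes B \<and> h \<in> bnodes B \<and> obdd_below ord B x l \<and> obdd_below ord B x h"
      using nodes by (cases "blab B u") auto
  qed
  ultimately show ?thesis using that by blast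
qed

definition obdd_low_step :: "obdd \<Rightarrow> (var \<Rightarrow> nat) \<Rightarrow> nat \<Rightarrow> assignment \<Rightarrow> nat \<Rightarrow> nat \<Rightarrow> bool" where
  "obdd_low_step B ord \<theta> \<tau> u v \<longleftrightarrow>
     (\<exists>x l h. blab B u = Dec x l h \<and> ord x < \<theta> \<and> v = (if \<tau> x then h else l))"

definition obdd_cut_node :: "obdd \<Rightarrow> (var \<Rightarrow> nat) \<Rightarrow> nat \<Rightarrow> nat \<Rightarrow> bool" where
  "obdd_cut_node B ord \<theta> g \<longleftrightarrow> (case blab B g of Sink _ \<Rightarrow> True | Dec x _ _ \<Rightarrow> \<theta> \<le> ord x)"

abbreviation obdd_accepts_from :: "obdd \<Rightarrow> assignment \<Rightarrow> nat \<Rightarrow> bool" where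
  "obdd_accepts_from B \<tau> g \<equiv> \<exists>v. (obdd_step B \<tau>)\<^sup>*\<^sup>* g v \<and> blab B v = Sink True"

lemma obdd_low_step_imp_step: "obdd_low_step B ord \<theta> \<tau> u v \<Longrightarrow> obdd_step B \<tau> u v"
  unfolding obdd_low_step_def obdd_step_def by blast

lemma obdd_low_steps_imp_steps:
  "(obdd_low_step B ord \<theta> \<tau>)\<^sup>*\<^sup>* u v \<Longrightarrow> (obdd_step B \<tau>)\<^sup>*\<^sup>* u v"
  using mono_rtranclp[of "obdd_low_step B ord \<theta> \<tau>" "obdd_step B \<tau>"] obdd_low_step_imp_step by blast

lemma obdd_low_step_cong:
  "(\<And>x. ord x < \<theta> \<Longrightarrow> \<tau> x = \<tau>' x) \<Longrightarrow> obdd_low_step B ord \<theta> \<tau> = obdd_low_step B ord \<theta> \<tau>'"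
  unfolding obdd_low_step_def by (intro ext) auto

lemma rtranclp_deterministic_comparable:
  assumes det: "\<And>u v v'. R u v \<Longrightarrow> R u v' \<Longrightarrow> v = v'"
  shows "R\<^sup>*\<^sup>* a b \<Longrightarrow> R\<^sup>*\<^sup>* a c \<Longrightarrow> R\<^sup>*\<^sup>* b c \<or> R\<^sup>*\<^sup>* c b"
proof (induction arbitrary: c rule: converse_rtranclp_induct)
  case (step a a')
  from step.prems show ?case
  proof (cases rule: converse_rtranclpE)
    case base
    then show ?thesis using step.hyps by (meson converse_rtranclp_into_rtranclp)
  next
    case (step a'')
    with det \<open>R a a'\<close> have "a'' = a'" by blast
    with step.IH \<open>R\<^sup>*\<^sup>* a'' c\<close> show ?thesis by blast
  qed
qed simp

lemma obdd_steps_from_sink: "(obdd_step B \<tau>)\<^sup>*\<^sup>* v g \<Longrightarrow> blab B v = Sink b \<Longrightarrow> g = v"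
  by (induction rule: converse_rtranclp_induct) (auto simp: obdd_step_def)

lemma obdd_steps_closed:
  assumes "obdd_ordered B ord" "(obdd_step B \<tau>)\<^sup>*\<^sup>* u v" "u \<in> bnodes B"
  shows "v \<in> bnodes B"
  using assms(2,3)
proof (induction rule: rtranclp_induct)
  case (step y z)
  then show ?case using assms(1) unfolding obdd_ordered_def obdd_step_def
    by (fastforce split: obdd_label.splits)
qed simp

lemma obdd_reaches_cut_node:
  "(obdd_step B \<tau>)\<^sup>*\<^sup>* u v \<Longrightarrow> blab B v = Sink b \<Longrightarrow>
   \<exists>g. (obdd_low_step B ord \<theta> \<tau>)\<^sup>*\<^sup>* u g \<and> obdd_cut_node B ord \<theta> g \<and> (obdd_step B \<tau>)\<^sup>*\<^sup>* g v"
proof (induction rule: converse_rtranclp_induct)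
  case base
  then show ?case unfolding obdd_cut_node_def by auto
next
  case (step u u')
  show ?case
  proof (cases "obdd_cut_node B ord \<theta> u")
    case True
    then show ?thesis using step by (meson converse_rtranclp_into_rtranclp rtranclp.rtrancl_refl)
  next
    case False
    with step.hyps(1) have "obdd_low_step B ord \<theta> \<tau> u u'"
      unfolding obdd_step_def obdd_low_step_def obdd_cut_node_def by fastforce
    with step.IH[OF step.prems] show ?thesis by (meson converse_rtranclp_into_rtranclp)
  qed
qed

text \<open>Below a cut node only variables after the threshold are tested.\<close>

lemma obdd_steps_from_cut_node:
  assumes ordered: "obdd_ordered B ord" and agree: "\<And>x. \<theta> \<le> ord x \<Longrightarrow> \<tau> x = \<tau>' x"
    and steps: "(obdd_step B \<tau>)\<^sup>*\<^sup>* g v" and g: "g \<in> bnodes B" "obdd_cut_node B ord \<theta> g"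
  shows "(obdd_step B \<tau>')\<^sup>*\<^sup>* g v \<and> v \<in> bnodes B \<and> obdd_cut_node B ord \<theta> v"
  using steps
proof (induction rule: rtranclp_induct)
  case (step y z)
  then have y: "y \<in> bnodes B" "obdd_cut_node B ord \<theta> y" "(obdd_step B \<tau>')\<^sup>*\<^sup>* g y" by auto
  from step.hyps(2) obtain x l h where yl: "blab B y = Dec x l h" and z: "z = (if \<tau> x then h else l)"
    unfolding obdd_step_def by auto
  from y(2) yl have "\<theta> \<le> ord x" unfolding obdd_cut_node_def by simp
  then have "obdd_step B \<tau>' y z" using yl z agree unfolding obdd_step_def by auto
  moreover from ordered y(1) yl have "z \<in> bnodes B" "obdd_below ord B x z"
    using z unfolding obdd_ordered_def by (auto dest!: bspec)
  moreover from this(2) \<open>\<theta> \<le> ord x\<close> have "obdd_cut_node B ord \<theta> z"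
    unfolding obdd_cut_node_def obdd_below_def by (auto split: obdd_label.splits)
  ultimately show ?case using y(3) by (meson rtranclp.rtrancl_into_rtrancl)
qed (use g in simp)

lemma obdd_accepts_from_cut_node_cong:
  assumes "obdd_ordered B ord" "\<And>x. \<theta> \<le> ord x \<Longrightarrow> \<tau> x = \<tau>' x"
    and "g \<in> bnodes B" "obdd_cut_node B ord \<theta> g"
  shows "obdd_accepts_from B \<tau> g \<longleftrightarrow> obdd_accepts_from B \<tau>' g"
  using obdd_steps_from_cut_node[OF assms(1) _ _ assms(3,4), of \<tau> \<tau>']
    obdd_steps_from_cut_node[OF assms(1) _ _ assms(3,4), of \<tau>' \<tau>] assms(2)
  by metis

lemma obdd_accepts_via_cut_node:
  assumes "(obdd_low_step B ord \<theta> \<tau>)\<^sup>*\<^sup>* (bsrc B) g" "obdd_cut_node B ord \<theta> g"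
  shows "obdd_accepts B \<tau> \<longleftrightarrow> obdd_accepts_from B \<tau> g"
proof
  have src_g: "(obdd_step B \<tau>)\<^sup>*\<^sup>* (bsrc B) g" using assms(1) by (rule obdd_low_steps_imp_steps)
  assume "obdd_accepts B \<tau>"
  then obtain v where v: "(obdd_step B \<tau>)\<^sup>*\<^sup>* (bsrc B) v" "blab B v = Sink True"
    unfolding obdd_accepts_def by auto
  have "(obdd_step B \<tau>)\<^sup>*\<^sup>* g v \<or> (obdd_step B \<tau>)\<^sup>*\<^sup>* v g"
    by (rule rtranclp_deterministic_comparable[OF _ src_g v(1)]) (auto simp: obdd_step_def)
  then show "obdd_accepts_from B \<tau> g" using obdd_steps_from_sink[OF _ v(2)] v(2) by auto
next
  assume "obdd_accepts_from B \<tau> g"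
  then show "obdd_accepts B \<tau>" using obdd_low_steps_imp_steps[OF assms(1)]
    unfolding obdd_accepts_def by (meson rtranclp_trans)
qed

text \<open>Fooling-set argument: for Z \<subseteq> I, let g Z be the first node at the cut reached on \<tau>s Z {}. The
  part of a run after the cut does not see Z, so if g Z = g Z' and i \<in> Z - Z', then \<tau>s Z {i} and
  \<tau>s Z' {i} are accepted alike, although exactly one of them satisfies f. Hence g is injective.\<close>

lemma obdd_fooling_bound:
  fixes I :: "'a set" and \<tau>s :: "'a set \<Rightarrow> 'a set \<Rightarrow> assignment"
  assumes B: "finite (bnodes B)" "bsrc B \<in> bnodes B" "obdd_ordered B ord"
    and acc: "\<And>\<tau>. obdd_accepts B \<tau> \<longleftrightarrow> f \<tau>" and "finite I"
    and low: "\<And>Z W W' x. ord x < \<theta> \<Longrightarrow> \<tau>s Z W x = \<tau>s Z W' x"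
    and high: "\<And>Z Z' W x. \<theta> \<le> ord x \<Longrightarrow> \<tau>s Z W x = \<tau>s Z' W x"
    and sem: "\<And>Z W. Z \<subseteq> I \<Longrightarrow> W \<subseteq> I \<Longrightarrow> f (\<tau>s Z W) \<longleftrightarrow> Z \<inter> W = {}"
  shows "2 ^ card I \<le> card (bnodes B)"
proof -
  define at_cut where "at_cut Z g \<longleftrightarrow> (obdd_low_step B ord \<theta> (\<tau>s Z {}))\<^sup>*\<^sup>* (bsrc B) g \<and>
    obdd_cut_node B ord \<theta> g \<and> g \<in> bnodes B" for Z g
  have "\<exists>g. at_cut Z g" if Z: "Z \<subseteq> I" for Z
  proof -
    obtain v where "(obdd_step B (\<tau>s Z {}))\<^sup>*\<^sup>* (bsrc B) v" "blab B v = Sink True"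
      using sem[OF Z empty_subsetI] acc unfolding obdd_accepts_def by blast
    from obdd_reaches_cut_node[OF this] obtain g where
      "(obdd_low_step B ord \<theta> (\<tau>s Z {}))\<^sup>*\<^sup>* (bsrc B) g" "obdd_cut_node B ord \<theta> g" by blast
    moreover from this(1) have "g \<in> bnodes B"
      using obdd_steps_closed[OF B(3) obdd_low_steps_imp_steps B(2)] by blast
    ultimately show ?thesis unfolding at_cut_def by blast
  qed
  then obtain cut where cut: "\<And>Z. Z \<subseteq> I \<Longrightarrow> at_cut Z (cut Z)" by metis
  have separates: "i \<in> Z'" if Z: "Z \<subseteq> I" "Z' \<subseteq> I" and eq: "cut Z = cut Z'" and i: "i \<in> Z" for Z Z' i
  proof (rule ccontr)
    assume i': "i \<notin> Z'"
    let ?g = "cut Z" and ?\<tau>1 = "\<tau>s Z {i}" and ?\<tau>2 = "\<tau>s Z' {i}"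
    have g: "?g \<in> bnodes B" "obdd_cut_node B ord \<theta> ?g"
      using cut[OF Z(1)] unfolding at_cut_def by auto
    have low_eq: "obdd_low_step B ord \<theta> (\<tau>s Y {}) = obdd_low_step B ord \<theta> (\<tau>s Y {i})" for Y
      by (rule obdd_low_step_cong[OF low])
    have "(obdd_low_step B ord \<theta> ?\<tau>1)\<^sup>*\<^sup>* (bsrc B) ?g" "(obdd_low_step B ord \<theta> ?\<tau>2)\<^sup>*\<^sup>* (bsrc B) ?g"
      using cut[OF Z(1)] cut[OF Z(2)] eq unfolding at_cut_def low_eq by simp_all
    note via_cut = this[THEN obdd_accepts_via_cut_node, OF g(2)]
    have "f ?\<tau>1 \<longleftrightarrow> obdd_accepts_from B ?\<tau>1 ?g" using acc via_cut(1) by simp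
    also have "\<dots> \<longleftrightarrow> obdd_accepts_from B ?\<tau>2 ?g" by (rule obdd_accepts_from_cut_node_cong[OF B(3) high g])
    also have "\<dots> \<longleftrightarrow> f ?\<tau>2" using acc via_cut(2) by simp
    finally have "f ?\<tau>1 \<longleftrightarrow> f ?\<tau>2" .
    moreover have "\<not> f ?\<tau>1" "f ?\<tau>2"
      using sem[OF Z(1), of "{i}"] sem[OF Z(2), of "{i}"] Z i i' by auto
    ultimately show False by simp
  qed
  have "inj_on cut (Pow I)"
  proof (rule inj_onI)
    fix Z Z' assume "Z \<in> Pow I" "Z' \<in> Pow I" "cut Z = cut Z'"
    then show "Z = Z'" using separates[of Z Z'] separates[of Z' Z] by auto
  qed
  moreover have "cut ` Pow I \<subseteq> bnodes B" using cut unfolding at_cut_def by auto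
  ultimately have "card (Pow I) \<le> card (bnodes B)" using B(1) by (rule card_inj_on_le)
  then show ?thesis using \<open>finite I\<close> by (simp add: card_Pow)
qed

section \<open>The edge formula and its OBDD lower bound\<close>

definition vertex_var :: "vertex \<Rightarrow> var" where
  "vertex_var v = to_nat (Inl v :: vertex + vertex \<times> vertex)"

definition edge_var :: "vertex \<times> vertex \<Rightarrow> var" where
  "edge_var e = to_nat (Inr e :: vertex + vertex \<times> vertex)"

lemma vertex_var_eq_iff [simp]: "vertex_var u = vertex_var v \<longleftrightarrow> u = v"
  unfolding vertex_var_def by simp

lemma edge_var_eq_iff [simp]: "edge_var e = edge_var e' \<longleftrightarrow> e = e'"
  unfolding edge_var_def by simp

lemma inj_vertex_var: "inj vertex_var"
  by (simp add: inj_def)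

lemma vertex_var_neq_edge_var [simp]: "vertex_var u \<noteq> edge_var e" "edge_var e \<noteq> vertex_var u"
  unfolding vertex_var_def edge_var_def by simp_all

definition edge_clause :: "vertex \<times> vertex \<Rightarrow> clause" where
  "edge_clause e = [(vertex_var (fst e), True), (vertex_var (snd e), True), (edge_var e, True)]"

definition graph_cnf :: "nat \<Rightarrow> nat \<Rightarrow> cnf" where
  "graph_cnf K D = map edge_clause (sorted_list_of_set (graph_edges K D))"

lemma set_graph_cnf: "set (graph_cnf K D) = edge_clause ` graph_edges K D"
  unfolding graph_cnf_def using finite_graph_edges by simp

lemma cnf_sem_graph_cnf:
  "cnf_sem (graph_cnf K D) \<tau> \<longleftrightarrow>
     (\<forall>e\<in>graph_edges K D. \<tau> (vertex_var (fst e)) \<or> \<tau> (vertex_var (snd e)) \<or> \<tau> (edge_var e))"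
  unfolding cnf_sem_def set_graph_cnf edge_clause_def by auto

lemma vertices_covered_by_edges:
  assumes "2 \<le> K" "v \<in> vertices K D"
  shows "\<exists>e\<in>graph_edges K D. v = fst e \<or> v = snd e"
proof -
  obtain w i where v: "v = (w, i)" "w \<in> addrs D" "i < K" using assms(2) unfolding vertices_def by auto
  show ?thesis
  proof (cases "i = 0")
    case True
    then have "(v, (w, 1)) \<in> graph_edges K D" using v assms(1) unfolding graph_edges_def vertices_def by auto
    then show ?thesis by force
  next
    case False
    then have "((w, 0), v) \<in> graph_edges K D" using v assms(1) unfolding graph_edges_def vertices_def by auto
    then show ?thesis by force
  qed
qed

lemma cnf_vars_graph_cnf:
  assumes "2 \<le> K"
  shows "cnf_vars (graph_cnf K D) = vertex_var ` vertices K D \<union> edge_var ` graph_edges K D"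
proof -
  have "cnf_vars (graph_cnf K D) =
      (\<Union>e\<in>graph_edges K D. {vertex_var (fst e), vertex_var (snd e), edge_var e})"
    unfolding cnf_vars_def set_graph_cnf edge_clause_def by auto
  also have "\<dots> = vertex_var ` vertices K D \<union> edge_var ` graph_edges K D"
    using vertices_covered_by_edges[OF assms] unfolding graph_edges_def by fastforce
  finally show ?thesis .
qed

text \<open>The edge variables of matched edges are false, so the clause of a matched pair (u, v) holds
  iff the variable of u or of v is true, that is, iff (u, v) does not lie in both Z and W.\<close>

definition matching_assignment ::
    "(vertex \<times> vertex) set \<Rightarrow> (vertex \<times> vertex) set \<Rightarrow> (vertex \<times> vertex) set \<Rightarrow> assignment" where
  "matching_assignment P Z W x \<longleftrightarrow> x \<notin> vertex_var ` fst ` (Z \<inter> P) \<union> vertex_var ` snd ` (W \<inter> P) \<union>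
     edge_var ` (P \<union> prod.swap ` P)"

context
  fixes ord :: "var \<Rightarrow> nat" and \<theta> P K D
  assumes P: "crossing_matching (ord \<circ> vertex_var) \<theta> (vertices K D) P"
begin

lemma crossing_matching_sides:
  "p \<in> P \<Longrightarrow> ord (vertex_var (fst p)) < \<theta>" "p \<in> P \<Longrightarrow> \<theta> \<le> ord (vertex_var (snd p))"
  using P unfolding crossing_matching_def by auto

lemma matching_assignment_low:
  "ord x < \<theta> \<Longrightarrow> matching_assignment P Z W x = matching_assignment P Z W' x"
  unfolding matching_assignment_def using crossing_matching_sides(2) by fastforce

lemma matching_assignment_high:
  "\<theta> \<le> ord x \<Longrightarrow> matching_assignment P Z W x = matching_assignment P Z' W x"
  unfolding matching_assignment_def using crossing_matching_sides(1) by fastforce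

lemma crossing_matching_fst_notin_snd: "p \<in> P \<Longrightarrow> q \<in> P \<Longrightarrow> fst p \<noteq> snd q"
  using crossing_matching_sides(1)[of p] crossing_matching_sides(2)[of q] by auto

lemma matching_assignment_fst:
  assumes p: "p \<in> P"
  shows "matching_assignment P Z W (vertex_var (fst p)) \<longleftrightarrow> p \<notin> Z"
proof -
  have "fst p \<in> fst ` (Z \<inter> P) \<longleftrightarrow> p \<in> Z"
    using P p unfolding crossing_matching_def by (auto dest: inj_onD)
  moreover have "fst p \<notin> snd ` (W \<inter> P)"
    using crossing_matching_fst_notin_snd[OF p] by auto
  ultimately show ?thesis
    unfolding matching_assignment_def by (auto simp: inj_image_mem_iff[OF inj_vertex_var])
qed

lemma matching_assignment_snd:
  assumes p: "p \<in> P"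
  shows "matching_assignment P Z W (vertex_var (snd p)) \<longleftrightarrow> p \<notin> W"
proof -
  have "snd p \<in> snd ` (W \<inter> P) \<longleftrightarrow> p \<in> W"
    using P p unfolding crossing_matching_def by (auto dest: inj_onD)
  moreover have "snd p \<notin> fst ` (Z \<inter> P)"
    using crossing_matching_fst_notin_snd[OF _ p] by force
  ultimately show ?thesis
    unfolding matching_assignment_def by (auto simp: inj_image_mem_iff[OF inj_vertex_var])
qed

lemma cnf_sem_matching_assignment:
  assumes "Z \<subseteq> P" "W \<subseteq> P"
  shows "cnf_sem (graph_cnf K D) (matching_assignment P Z W) \<longleftrightarrow> Z \<inter> W = {}"
proof
  assume sat: "cnf_sem (graph_cnf K D) (matching_assignment P Z W)"
  show "Z \<inter> W = {}"
  proof (rule ccontr)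
    assume "Z \<inter> W \<noteq> {}"
    then obtain u v where uv: "(u, v) \<in> Z" "(u, v) \<in> W" by auto
    then have uvP: "(u, v) \<in> P" using assms by auto
    then have "u \<in> vertices K D" "v \<in> vertices K D" "adjacent u v"
      using P unfolding crossing_matching_def by auto
    then obtain e where e: "e \<in> graph_edges K D" "e = (u, v) \<or> e = (v, u)"
      using adjacent_graph_edges by blast
    have "\<not> matching_assignment P Z W (vertex_var u)" "\<not> matching_assignment P Z W (vertex_var v)"
      using matching_assignment_fst[OF uvP] matching_assignment_snd[OF uvP] uv by auto
    moreover have "\<not> matching_assignment P Z W (edge_var e)"
      using e(2) uvP unfolding matching_assignment_def by force
    moreover have "matching_assignment P Z W (vertex_var (fst e)) \<or>
        matching_assignment P Z W (vertex_var (snd e)) \<or> matching_assignment P Z W (edge_var e)"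
      using sat e(1) unfolding cnf_sem_graph_cnf by blast
    ultimately show False using e(2) by auto
  qed
next
  assume disj: "Z \<inter> W = {}"
  show "cnf_sem (graph_cnf K D) (matching_assignment P Z W)"
    unfolding cnf_sem_graph_cnf
  proof
    fix e
    show "matching_assignment P Z W (vertex_var (fst e)) \<or> matching_assignment P Z W (vertex_var (snd e)) \<or>
        matching_assignment P Z W (edge_var e)"
    proof (cases "matching_assignment P Z W (edge_var e)")
      case False
      then obtain p where "p \<in> P" "e = p \<or> e = prod.swap p"
        unfolding matching_assignment_def by auto
      then show ?thesis
        using disj matching_assignment_fst matching_assignment_snd by (cases p) auto
    qed simp
  qed
qed

end

theorem graph_cnf_obdd_size:
  assumes B: "is_obdd B (cnf_vars (graph_cnf (2 * m) D))"
    and acc: "\<And>\<tau>. obdd_accepts B \<tau> \<longleftrightarrow> cnf_sem (graph_cnf (2 * m) D) \<tau>" and m: "1 \<le> m"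
  shows "2 ^ (m * D) \<le> obdd_size B"
proof -
  obtain ord where inj: "inj_on ord (cnf_vars (graph_cnf (2 * m) D))" and ordered: "obdd_ordered B ord"
    using is_obdd_obtain_order[OF B] .
  have "vertex_var ` vertices (2 * m) D \<subseteq> cnf_vars (graph_cnf (2 * m) D)"
    using cnf_vars_graph_cnf[of "2 * m" D] m by auto
  then have "inj_on (ord \<circ> vertex_var) (vertices (2 * m) D)"
    using comp_inj_on[OF inj_on_subset[OF inj_vertex_var subset_UNIV] inj_on_subset[OF inj]] by blast
  then obtain \<theta> P where P: "crossing_matching (ord \<circ> vertex_var) \<theta> (vertices (2 * m) D) P"
    and card_P: "m * D \<le> card P"
    using large_crossing_matching by blast
  have "2 ^ card P \<le> card (bnodes B)"
  proof (rule obdd_fooling_bound[where \<tau>s = "matching_assignment P" and \<theta> = \<theta>, OF _ _ ordered acc])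
    show "finite (bnodes B)" "bsrc B \<in> bnodes B" using B unfolding is_obdd_def by auto
    show "finite P" using P unfolding crossing_matching_def by simp
  qed (simp_all add: matching_assignment_low[OF P] matching_assignment_high[OF P]
      cnf_sem_matching_assignment[OF P])
  moreover have "(2::nat) ^ (m * D) \<le> 2 ^ card P" using card_P by (simp add: power_increasing)
  ultimately show ?thesis unfolding obdd_size_def by linarith
qed

section \<open>Canonical TDDs\<close>

instance vtree :: countable by countable_datatype

abbreviation vt_vars :: "vtree \<Rightarrow> var set" where
  "vt_vars t \<equiv> set (vt_leaves t)"

abbreviation clause_vars :: "clause \<Rightarrow> var set" where
  "clause_vars C \<equiv> fst ` set C"

lemma vt_subtrees_self: "t \<in> vt_subtrees t"
  by (cases t) auto

lemma vt_subtrees_trans: "s \<in> vt_subtrees t \<Longrightarrow> vt_subtrees s \<subseteq> vt_subtrees t"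
  by (induction t) auto

lemma vt_subtrees_children: "VNode t1 t2 \<in> vt_subtrees T \<Longrightarrow> t1 \<in> vt_subtrees T \<and> t2 \<in> vt_subtrees T"
  using vt_subtrees_trans[of "VNode t1 t2" T] vt_subtrees_self[of t1] vt_subtrees_self[of t2] by auto

lemma finite_vt_subtrees: "finite (vt_subtrees t)"
  by (induction t) auto

lemma card_vt_subtrees: "card (vt_subtrees t) + 1 \<le> 2 * length (vt_leaves t)"
proof (induction t)
  case (VNode t1 t2)
  have "card (vt_subtrees (VNode t1 t2)) \<le> Suc (card (vt_subtrees t1 \<union> vt_subtrees t2))"
    by (simp add: card_insert_le_m1 card_insert_if)
  also have "\<dots> \<le> Suc (card (vt_subtrees t1) + card (vt_subtrees t2))" using card_Un_le by simp
  finally show ?case using VNode by simp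
qed simp

context
  fixes F :: cnf
begin

definition cut_clauses :: "vtree \<Rightarrow> clause set" where
  "cut_clauses t = {C \<in> set F. clause_vars C \<inter> vt_vars t \<noteq> {} \<and> \<not> clause_vars C \<subseteq> vt_vars t}"

definition boundary :: "vtree \<Rightarrow> var set" where
  "boundary t = vt_vars t \<inter> (\<Union>C\<in>cut_clauses t. clause_vars C)"

definition cut_sat :: "vtree \<Rightarrow> assignment \<Rightarrow> clause set" where
  "cut_sat t \<tau> = {C \<in> cut_clauses t. \<exists>l\<in>set C. fst l \<in> vt_vars t \<and> \<tau> (fst l) = snd l}"

definition inner_sat :: "vtree \<Rightarrow> assignment \<Rightarrow> bool" where
  "inner_sat t \<tau> \<longleftrightarrow> (\<forall>C\<in>set F. clause_vars C \<subseteq> vt_vars t \<longrightarrow> (\<exists>l\<in>set C. \<tau> (fst l) = snd l))"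

definition cut_states :: "vtree \<Rightarrow> clause set set" where
  "cut_states t = range (cut_sat t)"

text \<open>A node of the canonical TDD is a vtree node t together with the set S of clauses crossing t
  that are already satisfied inside t; it computes state_fun t S.\<close>

definition state_fun :: "vtree \<Rightarrow> clause set \<Rightarrow> assignment \<Rightarrow> bool" where
  "state_fun t S \<tau> \<longleftrightarrow> inner_sat t \<tau> \<and> cut_sat t \<tau> = S"

definition compatible_states :: "vtree \<Rightarrow> vtree \<Rightarrow> clause set \<Rightarrow> clause set \<Rightarrow> clause set \<Rightarrow> bool" where
  "compatible_states t1 t2 S S1 S2 \<longleftrightarrow>
     (\<forall>C\<in>set F. clause_vars C \<subseteq> vt_vars t1 \<union> vt_vars t2 \<and> \<not> clause_vars C \<subseteq> vt_vars t1 \<and>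
        \<not> clause_vars C \<subseteq> vt_vars t2 \<longrightarrow> C \<in> S1 \<union> S2) \<and>
     (S1 \<union> S2) \<inter> cut_clauses (VNode t1 t2) = S"

text \<open>Nodes are natural numbers: an injective code of the pair (t, S), where a set S \<subseteq> set F
  is listed in the order of F.\<close>

definition state_code :: "vtree \<Rightarrow> clause set \<Rightarrow> nat" where
  "state_code t S = to_nat (t, filter (\<lambda>C. C \<in> S) F)"

definition code_vtree :: "nat \<Rightarrow> vtree" where
  "code_vtree g = fst (from_nat g :: vtree \<times> clause list)"

definition code_state :: "nat \<Rightarrow> clause set" where
  "code_state g = set (snd (from_nat g :: vtree \<times> clause list))"

definition leaf_label_of :: "vtree \<Rightarrow> clause set \<Rightarrow> leaf_label" where
  "leaf_label_of t S =
    (if state_fun t S (\<lambda>_. True) \<and> state_fun t S (\<lambda>_. False) then LConst True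
     else if state_fun t S (\<lambda>_. True) then LPos
     else if state_fun t S (\<lambda>_. False) then LNeg else LConst False)"

definition state_inputs :: "vtree \<Rightarrow> clause set \<Rightarrow> (nat \<times> nat) set" where
  "state_inputs t S = (case t of VLeaf _ \<Rightarrow> {}
     | VNode t1 t2 \<Rightarrow> {(state_code t1 S1, state_code t2 S2) | S1 S2.
         S1 \<in> cut_states t1 \<and> S2 \<in> cut_states t2 \<and> compatible_states t1 t2 S S1 S2})"

definition canonical_tdd :: "vtree \<Rightarrow> tdd" where
  "canonical_tdd T = \<lparr> tnodes = (\<lambda>(t, S). state_code t S) ` Sigma (vt_subtrees T) cut_states,
     tvt = code_vtree,
     tlab = (\<lambda>g. leaf_label_of (code_vtree g) (code_state g)),
     tin = (\<lambda>g. state_inputs (code_vtree g) (code_state g)),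
     tout = state_code T {} \<rparr>"

lemma cut_states_subset: "S \<in> cut_states t \<Longrightarrow> S \<subseteq> set F"
  unfolding cut_states_def cut_sat_def cut_clauses_def by auto

lemma finite_cut_states: "finite (cut_states t)"
proof (rule finite_subset)
  show "cut_states t \<subseteq> Pow (set F)" using cut_states_subset by blast
qed simp

lemma code_state_code [simp]:
  "code_vtree (state_code t S) = t" "S \<subseteq> set F \<Longrightarrow> code_state (state_code t S) = S"
  unfolding code_vtree_def code_state_def state_code_def by auto

lemma state_code_eq_iff:
  "S \<subseteq> set F \<Longrightarrow> S' \<subseteq> set F \<Longrightarrow> state_code t S = state_code t' S' \<longleftrightarrow> t = t' \<and> S = S'"
  by (metis code_state_code)

lemma tnodes_canonical_tdd:
  "g \<in> tnodes (canonical_tdd T) \<longleftrightarrow> (\<exists>t S. g = state_code t S \<and> t \<in> vt_subtrees T \<and> S \<in> cut_states t)"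
  unfolding canonical_tdd_def by auto

lemma inner_sat_cong:
  assumes "\<And>x. x \<in> vt_vars t \<Longrightarrow> \<tau> x = \<tau>' x"
  shows "inner_sat t \<tau> \<longleftrightarrow> inner_sat t \<tau>'"
  unfolding inner_sat_def
proof (intro ball_cong imp_cong refl bex_cong)
  fix C l assume "clause_vars C \<subseteq> vt_vars t" "l \<in> set C"
  then show "\<tau> (fst l) = snd l \<longleftrightarrow> \<tau>' (fst l) = snd l" using assms by auto
qed

lemma cut_sat_cong:
  assumes "\<And>x. x \<in> boundary t \<Longrightarrow> \<tau> x = \<tau>' x"
  shows "cut_sat t \<tau> = cut_sat t \<tau>'"
  unfolding cut_sat_def
proof (intro Collect_cong conj_cong refl bex_cong)
  fix C l assume "C \<in> cut_clauses t" "l \<in> set C" "fst l \<in> vt_vars t"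
  then have "fst l \<in> boundary t" unfolding boundary_def by blast
  then show "\<tau> (fst l) = snd l \<longleftrightarrow> \<tau>' (fst l) = snd l" using assms by simp
qed

lemma boundary_subset: "boundary t \<subseteq> vt_vars t"
  unfolding boundary_def by auto

lemma boundary_VNode: "boundary (VNode t1 t2) \<subseteq> boundary t1 \<union> boundary t2"
proof
  fix x assume "x \<in> boundary (VNode t1 t2)"
  then obtain C where x: "x \<in> vt_vars t1 \<union> vt_vars t2" "C \<in> cut_clauses (VNode t1 t2)" "x \<in> clause_vars C"
    unfolding boundary_def by auto
  then have "C \<in> set F" "\<not> clause_vars C \<subseteq> vt_vars t1 \<union> vt_vars t2"
    unfolding cut_clauses_def by auto
  then have "x \<in> vt_vars t1 \<Longrightarrow> C \<in> cut_clauses t1" "x \<in> vt_vars t2 \<Longrightarrow> C \<in> cut_clauses t2"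
    using x(3) unfolding cut_clauses_def by blast+
  then show "x \<in> boundary t1 \<union> boundary t2" using x unfolding boundary_def by blast
qed

lemma finite_boundary: "finite (boundary t)"
  using boundary_subset by (rule finite_subset) simp

lemma card_boundary_VNode:
  "card (boundary (VNode t1 t2)) \<le> card (boundary t1) + card (boundary t2)"
  using card_mono[OF _ boundary_VNode] card_Un_le[of "boundary t1" "boundary t2"] finite_boundary
  by (meson finite_UnI le_trans)

lemma state_fun_cong:
  assumes "\<And>x. x \<in> vt_vars t \<Longrightarrow> \<tau> x = \<tau>' x"
  shows "state_fun t S \<tau> \<longleftrightarrow> state_fun t S \<tau>'"
proof -
  have "inner_sat t \<tau> \<longleftrightarrow> inner_sat t \<tau>'" using assms by (rule inner_sat_cong)
  moreover have "cut_sat t \<tau> = cut_sat t \<tau>'"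
    using assms boundary_subset by (intro cut_sat_cong) blast
  ultimately show ?thesis unfolding state_fun_def by simp
qed

lemma inner_sat_mono: "vt_vars t' \<subseteq> vt_vars t \<Longrightarrow> inner_sat t \<tau> \<Longrightarrow> inner_sat t' \<tau>"
  unfolding inner_sat_def by (meson subset_trans)

lemma inner_sat_VNode:
  "inner_sat (VNode t1 t2) \<tau> \<longleftrightarrow> inner_sat t1 \<tau> \<and> inner_sat t2 \<tau> \<and>
     (\<forall>C\<in>set F. clause_vars C \<subseteq> vt_vars t1 \<union> vt_vars t2 \<and> \<not> clause_vars C \<subseteq> vt_vars t1 \<and>
        \<not> clause_vars C \<subseteq> vt_vars t2 \<longrightarrow> C \<in> cut_sat t1 \<tau> \<union> cut_sat t2 \<tau>)"
proof
  assume inner: "inner_sat (VNode t1 t2) \<tau>"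
  have "C \<in> cut_sat t1 \<tau> \<union> cut_sat t2 \<tau>"
    if C: "C \<in> set F" "clause_vars C \<subseteq> vt_vars t1 \<union> vt_vars t2" "\<not> clause_vars C \<subseteq> vt_vars t1"
      "\<not> clause_vars C \<subseteq> vt_vars t2" for C
  proof -
    have "clause_vars C \<subseteq> vt_vars (VNode t1 t2)" using C(2) by simp
    then obtain l where l: "l \<in> set C" "\<tau> (fst l) = snd l" using inner C(1) unfolding inner_sat_def by blast
    have "fst l \<in> vt_vars t1 \<union> vt_vars t2" using l(1) C(2) by auto
    moreover have "C \<in> cut_clauses t1" "C \<in> cut_clauses t2" using C unfolding cut_clauses_def by auto
    ultimately show ?thesis using l unfolding cut_sat_def by auto
  qed
  moreover have "inner_sat t1 \<tau>" "inner_sat t2 \<tau>"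
    using inner_sat_mono[OF _ inner] by simp_all
  ultimately show "inner_sat t1 \<tau> \<and> inner_sat t2 \<tau> \<and>
     (\<forall>C\<in>set F. clause_vars C \<subseteq> vt_vars t1 \<union> vt_vars t2 \<and> \<not> clause_vars C \<subseteq> vt_vars t1 \<and>
        \<not> clause_vars C \<subseteq> vt_vars t2 \<longrightarrow> C \<in> cut_sat t1 \<tau> \<union> cut_sat t2 \<tau>)"
    by blast
next
  assume "inner_sat t1 \<tau> \<and> inner_sat t2 \<tau> \<and>
     (\<forall>C\<in>set F. clause_vars C \<subseteq> vt_vars t1 \<union> vt_vars t2 \<and> \<not> clause_vars C \<subseteq> vt_vars t1 \<and>
        \<not> clause_vars C \<subseteq> vt_vars t2 \<longrightarrow> C \<in> cut_sat t1 \<tau> \<union> cut_sat t2 \<tau>)"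
  then show "inner_sat (VNode t1 t2) \<tau>"
    unfolding inner_sat_def cut_sat_def by (auto 0 4)
qed

lemma cut_sat_VNode:
  "cut_sat (VNode t1 t2) \<tau> = (cut_sat t1 \<tau> \<union> cut_sat t2 \<tau>) \<inter> cut_clauses (VNode t1 t2)"
proof (intro set_eqI iffI)
  fix C assume C: "C \<in> cut_sat (VNode t1 t2) \<tau>"
  then have cut: "C \<in> cut_clauses (VNode t1 t2)" unfolding cut_sat_def by blast
  from C obtain l where l: "l \<in> set C" "fst l \<in> vt_vars t1 \<union> vt_vars t2" "\<tau> (fst l) = snd l"
    unfolding cut_sat_def by auto
  have "fst l \<in> clause_vars C" using l(1) by blast
  then have "C \<in> cut_clauses t1 \<or> C \<in> cut_clauses t2" "fst l \<in> vt_vars t1 \<longrightarrow> C \<in> cut_clauses t1"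
    "fst l \<in> vt_vars t2 \<longrightarrow> C \<in> cut_clauses t2"
    using cut l(2) unfolding cut_clauses_def by auto
  then show "C \<in> (cut_sat t1 \<tau> \<union> cut_sat t2 \<tau>) \<inter> cut_clauses (VNode t1 t2)"
    using cut l unfolding cut_sat_def by auto
qed (auto simp: cut_sat_def)

lemma tdd_eval_canonical_tdd:
  "S \<subseteq> set F \<Longrightarrow> tdd_eval (canonical_tdd T) t (state_code t S) \<tau> \<longleftrightarrow> state_fun t S \<tau>"
proof (induction t arbitrary: S)
  case (VLeaf x)
  have "state_fun (VLeaf x) S \<tau> \<longleftrightarrow> state_fun (VLeaf x) S (\<lambda>_. \<tau> x)" by (rule state_fun_cong) simp
  then show ?case using VLeaf.prems
    by (cases "\<tau> x") (auto simp: canonical_tdd_def leaf_label_of_def)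
next
  case (VNode t1 t2)
  have "tdd_eval (canonical_tdd T) (VNode t1 t2) (state_code (VNode t1 t2) S) \<tau> \<longleftrightarrow>
     (\<exists>S1\<in>cut_states t1. \<exists>S2\<in>cut_states t2. compatible_states t1 t2 S S1 S2 \<and>
        tdd_eval (canonical_tdd T) t1 (state_code t1 S1) \<tau> \<and> tdd_eval (canonical_tdd T) t2 (state_code t2 S2) \<tau>)"
    using VNode.prems by (auto simp: canonical_tdd_def state_inputs_def)
  also have "\<dots> \<longleftrightarrow> (\<exists>S1\<in>cut_states t1. \<exists>S2\<in>cut_states t2. compatible_states t1 t2 S S1 S2 \<and>
        state_fun t1 S1 \<tau> \<and> state_fun t2 S2 \<tau>)"
    using VNode.IH(1)[OF cut_states_subset] VNode.IH(2)[OF cut_states_subset] by blast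
  also have "\<dots> \<longleftrightarrow> compatible_states t1 t2 S (cut_sat t1 \<tau>) (cut_sat t2 \<tau>) \<and> inner_sat t1 \<tau> \<and> inner_sat t2 \<tau>"
    unfolding state_fun_def cut_states_def by auto
  also have "\<dots> \<longleftrightarrow> state_fun (VNode t1 t2) S \<tau>"
    unfolding state_fun_def compatible_states_def inner_sat_VNode cut_sat_VNode by auto
  finally show ?case .
qed

lemma card_cut_states: "card (cut_states t) \<le> 2 ^ card (boundary t)"
proof -
  have fin: "finite (boundary t)" by (rule finite_boundary)
  have "cut_states t \<subseteq> (\<lambda>A. cut_sat t (\<lambda>x. x \<in> A)) ` Pow (boundary t)"
  proof
    fix S assume "S \<in> cut_states t"
    then obtain \<tau> where "S = cut_sat t \<tau>" unfolding cut_states_def by auto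
    also have "\<dots> = cut_sat t (\<lambda>x. x \<in> {y \<in> boundary t. \<tau> y})" by (rule cut_sat_cong) simp
    finally show "S \<in> (\<lambda>A. cut_sat t (\<lambda>x. x \<in> A)) ` Pow (boundary t)" by blast
  qed
  then have "card (cut_states t) \<le> card (Pow (boundary t))"
    using fin by (meson card_image_le finite_Pow_iff surj_card_le order_trans card_mono finite_imageI)
  then show ?thesis using fin by (simp add: card_Pow)
qed

lemma card_state_inputs:
  "card (state_inputs t S) \<le> (case t of VLeaf _ \<Rightarrow> 0 | VNode t1 t2 \<Rightarrow> card (cut_states t1) * card (cut_states t2))"
proof (cases t)
  case (VNode t1 t2)
  have "state_inputs t S \<subseteq> (\<lambda>(S1, S2). (state_code t1 S1, state_code t2 S2)) ` (cut_states t1 \<times> cut_states t2)"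
    unfolding VNode state_inputs_def by auto
  then have "card (state_inputs t S) \<le> card (cut_states t1 \<times> cut_states t2)"
    using finite_cut_states by (meson card_image_le card_mono finite_SigmaI finite_imageI order_trans)
  then show ?thesis unfolding VNode by (simp add: card_cartesian_product)
qed (simp add: state_inputs_def)

context
  fixes T :: vtree
  assumes vars_T: "vt_vars T = cnf_vars F"
begin

lemma cut_clauses_root: "cut_clauses T = {}"
  using vars_T unfolding cut_clauses_def cnf_vars_def by auto

lemma is_ntdd_canonical_tdd: "is_ntdd (canonical_tdd T) T"
  unfolding is_ntdd_def
proof (intro conjI ballI)
  show "finite (tnodes (canonical_tdd T))"
    unfolding canonical_tdd_def using finite_vt_subtrees finite_cut_states by simp
  have "{} \<in> cut_states T" unfolding cut_states_def cut_sat_def cut_clauses_root by auto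
  then show "tout (canonical_tdd T) \<in> tnodes (canonical_tdd T)"
    unfolding tnodes_canonical_tdd using vt_subtrees_self by (auto simp: canonical_tdd_def)
  show "tvt (canonical_tdd T) (tout (canonical_tdd T)) = T" by (simp add: canonical_tdd_def)
  fix g assume "g \<in> tnodes (canonical_tdd T)"
  then obtain t S where g: "g = state_code t S" "t \<in> vt_subtrees T" "S \<in> cut_states t"
    unfolding tnodes_canonical_tdd by auto
  then show "tvt (canonical_tdd T) g \<in> vt_subtrees T" by (simp add: canonical_tdd_def)
  show "case tvt (canonical_tdd T) g of VLeaf x \<Rightarrow> tin (canonical_tdd T) g = {}
       | VNode t1 t2 \<Rightarrow> tin (canonical_tdd T) g \<subseteq> {(g1, g2). g1 \<in> tnodes (canonical_tdd T) \<and>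
           g2 \<in> tnodes (canonical_tdd T) \<and> tvt (canonical_tdd T) g1 = t1 \<and> tvt (canonical_tdd T) g2 = t2}"
  proof (cases t)
    case (VNode t1 t2)
    then have "t1 \<in> vt_subtrees T" "t2 \<in> vt_subtrees T" using vt_subtrees_children g(2) by blast+
    then show ?thesis
      using g VNode cut_states_subset
      by (auto simp: canonical_tdd_def state_inputs_def tnodes_canonical_tdd)
  qed (use g cut_states_subset in \<open>auto simp: canonical_tdd_def state_inputs_def\<close>)
qed

lemma is_tdd_canonical_tdd: "is_tdd (canonical_tdd T) T"
  unfolding is_tdd_def
proof (intro conjI is_ntdd_canonical_tdd; intro allI impI)
  fix x g g'
  assume "g \<in> tnodes (canonical_tdd T) \<and> g' \<in> tnodes (canonical_tdd T) \<and>
    tvt (canonical_tdd T) g = VLeaf x \<and> tvt (canonical_tdd T) g' = VLeaf x"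
  then obtain S S' where g: "g = state_code (VLeaf x) S" "S \<subseteq> set F"
    "g' = state_code (VLeaf x) S'" "S' \<subseteq> set F"
    unfolding tnodes_canonical_tdd using cut_states_subset by (auto simp: canonical_tdd_def)
  have lab: "tlab (canonical_tdd T) g = leaf_label_of (VLeaf x) S"
    "tlab (canonical_tdd T) g' = leaf_label_of (VLeaf x) S'"
    using g by (auto simp: canonical_tdd_def)
  have same: "state_fun (VLeaf x) S (\<lambda>_. b) \<Longrightarrow> state_fun (VLeaf x) S' (\<lambda>_. b) \<Longrightarrow> g = g'" for b
    using g unfolding state_fun_def by simp
  show "(tlab (canonical_tdd T) g = LPos \<and> tlab (canonical_tdd T) g' = LPos \<longrightarrow> g = g') \<and>
        (tlab (canonical_tdd T) g = LNeg \<and> tlab (canonical_tdd T) g' = LNeg \<longrightarrow> g = g') \<and>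
        (tlab (canonical_tdd T) g = LConst True \<and> tlab (canonical_tdd T) g' = LConst True \<longrightarrow> g = g') \<and>
        (tlab (canonical_tdd T) g = LConst True \<and> g' \<noteq> g \<longrightarrow> tlab (canonical_tdd T) g' = LConst False)"
    unfolding lab leaf_label_of_def using same[of True] same[of False] by (auto split: if_splits)
next
  fix t1 t2 g g'
  assume nodes: "g \<in> tnodes (canonical_tdd T) \<and> g' \<in> tnodes (canonical_tdd T) \<and>
    tvt (canonical_tdd T) g = VNode t1 t2 \<and> tvt (canonical_tdd T) g' = VNode t1 t2 \<and> g \<noteq> g'"
  then obtain S S' where "g = state_code (VNode t1 t2) S" "S \<in> cut_states (VNode t1 t2)"
    "g' = state_code (VNode t1 t2) S'" "S' \<in> cut_states (VNode t1 t2)"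
    unfolding tnodes_canonical_tdd by (auto simp: canonical_tdd_def)
  moreover from this nodes have "S \<noteq> S'" by auto
  ultimately have g: "g = state_code (VNode t1 t2) S" "S \<subseteq> set F"
    "g' = state_code (VNode t1 t2) S'" "S' \<subseteq> set F" "S \<noteq> S'"
    using cut_states_subset by auto
  show "tin (canonical_tdd T) g \<inter> tin (canonical_tdd T) g' = {}"
  proof (rule ccontr)
    assume "tin (canonical_tdd T) g \<inter> tin (canonical_tdd T) g' \<noteq> {}"
    then obtain p where "p \<in> state_inputs (VNode t1 t2) S" "p \<in> state_inputs (VNode t1 t2) S'"
      using g by (auto simp: canonical_tdd_def)
    then obtain S1 S2 S1' S2' where
      "compatible_states t1 t2 S S1 S2" "compatible_states t1 t2 S' S1' S2'"
      "state_code t1 S1 = state_code t1 S1'" "state_code t2 S2 = state_code t2 S2'"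
      "S1 \<in> cut_states t1" "S2 \<in> cut_states t2" "S1' \<in> cut_states t1" "S2' \<in> cut_states t2"
      unfolding state_inputs_def by auto
    moreover have "S1 = S1'" "S2 = S2'"
      using calculation state_code_eq_iff[OF cut_states_subset cut_states_subset] by blast+
    ultimately show False using g(5) unfolding compatible_states_def by blast
  qed
qed

lemma tdd_computes_canonical_tdd: "tdd_computes (canonical_tdd T) T \<tau> \<longleftrightarrow> cnf_sem F \<tau>"
proof -
  have "tdd_computes (canonical_tdd T) T \<tau> \<longleftrightarrow> state_fun T {} \<tau>"
    unfolding tdd_computes_def using tdd_eval_canonical_tdd[of "{}" T] by (simp add: canonical_tdd_def)
  also have "\<dots> \<longleftrightarrow> inner_sat T \<tau>" unfolding state_fun_def cut_sat_def cut_clauses_root by simp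
  also have "\<dots> \<longleftrightarrow> cnf_sem F \<tau>"
  proof -
    have "clause_vars C \<subseteq> vt_vars T" if "C \<in> set F" for C
      using that vars_T unfolding cnf_vars_def by auto
    then show ?thesis unfolding inner_sat_def cnf_sem_def by (auto simp: case_prod_beta)
  qed
  finally show ?thesis .
qed

lemma tdd_size_canonical_tdd:
  assumes "\<And>t. t \<in> vt_subtrees T \<Longrightarrow> card (boundary t) \<le> \<beta>"
  shows "tdd_size (canonical_tdd T) \<le> card (vt_subtrees T) * 2 ^ (3 * \<beta>)"
proof -
  let ?K = "Sigma (vt_subtrees T) cut_states"
  have states: "card (cut_states t) \<le> 2 ^ \<beta>" if "t \<in> vt_subtrees T" for t
    using card_cut_states[of t] assms[OF that] by (meson le_trans one_le_numeral power_increasing)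
  have inputs: "card (state_inputs t S) \<le> 2 ^ \<beta> * 2 ^ \<beta>" if "t \<in> vt_subtrees T" for t S
  proof (cases t)
    case (VNode t1 t2)
    then have "card (cut_states t1) * card (cut_states t2) \<le> 2 ^ \<beta> * 2 ^ \<beta>"
      using vt_subtrees_children that states by (metis mult_le_mono)
    then show ?thesis using card_state_inputs[of t S] VNode by simp
  qed (simp add: state_inputs_def)
  have inj: "inj_on (\<lambda>(t, S). state_code t S) ?K"
    using state_code_eq_iff cut_states_subset unfolding inj_on_def by auto
  have "tdd_size (canonical_tdd T) = (\<Sum>k\<in>?K. card (state_inputs (fst k) (snd k)))"
    unfolding tdd_size_def
  proof (rule sum.reindex_cong[OF inj])
    show "tnodes (canonical_tdd T) = (\<lambda>(t, S). state_code t S) ` ?K" by (simp add: canonical_tdd_def)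
    fix k assume "k \<in> ?K"
    then show "card (tin (canonical_tdd T) ((\<lambda>(t, S). state_code t S) k)) =
        card (state_inputs (fst k) (snd k))"
      using cut_states_subset by (cases k) (auto simp: canonical_tdd_def)
  qed
  also have "\<dots> \<le> card ?K * (2 ^ \<beta> * 2 ^ \<beta>)"
    using sum_mono[of ?K "\<lambda>k. card (state_inputs (fst k) (snd k))" "\<lambda>_. 2 ^ \<beta> * 2 ^ \<beta>"] inputs
    by auto
  also have "card ?K \<le> card (vt_subtrees T) * 2 ^ \<beta>"
  proof -
    have "card ?K = (\<Sum>t\<in>vt_subtrees T. card (cut_states t))"
      using finite_vt_subtrees finite_cut_states by (simp add: card_SigmaI)
    also have "\<dots> \<le> (\<Sum>t\<in>vt_subtrees T. 2 ^ \<beta>)" using states by (rule sum_mono)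
    finally show ?thesis by simp
  qed
  then have "card ?K * (2 ^ \<beta> * 2 ^ \<beta>) \<le> card (vt_subtrees T) * 2 ^ \<beta> * (2 ^ \<beta> * 2 ^ \<beta>)"
    by (rule mult_le_mono1)
  also have "\<dots> = card (vt_subtrees T) * 2 ^ (3 * \<beta>)"
    by (simp add: numeral_3_eq_3 power_add mult.assoc)
  finally show ?thesis .
qed

end

end

theorem canonical_tdd:
  assumes "vt_vars T = cnf_vars F" and "\<And>t. t \<in> vt_subtrees T \<Longrightarrow> card (boundary F t) \<le> \<beta>"
  shows "is_tdd (canonical_tdd F T) T" "\<And>\<tau>. tdd_computes (canonical_tdd F T) T \<tau> \<longleftrightarrow> cnf_sem F \<tau>"
    "tdd_size (canonical_tdd F T) \<le> card (vt_subtrees T) * 2 ^ (3 * \<beta>)"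
  using is_tdd_canonical_tdd tdd_computes_canonical_tdd tdd_size_canonical_tdd assms by blast+

section \<open>A vtree along the tree of cliques\<close>

definition clique_edges :: "nat \<Rightarrow> nat list \<Rightarrow> (vertex \<times> vertex) set" where
  "clique_edges K w = {((w, i), (w, j)) | i j. i < j \<and> j < K}"

definition parent_edges :: "nat \<Rightarrow> nat list \<Rightarrow> (vertex \<times> vertex) set" where
  "parent_edges K w = (if w = [] then {} else {((butlast w, i), (w, i)) | i. i < K})"

lemma graph_edges_eq_owned:
  "graph_edges K D = (\<Union>w\<in>addrs D. clique_edges K w \<union> parent_edges K w)"
proof (intro set_eqI iffI)
  fix e assume "e \<in> graph_edges K D"
  then obtain p i q j where e: "e = ((p, i), (q, j))" "p \<in> addrs D" "q \<in> addrs D" "i < K" "j < K"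
    "(p = q \<and> i < j) \<or> (i = j \<and> (\<exists>a<3. q = p @ [a]))"
    unfolding graph_edges_def vertices_def by auto
  then show "e \<in> (\<Union>w\<in>addrs D. clique_edges K w \<union> parent_edges K w)"
    unfolding clique_edges_def parent_edges_def by (auto intro!: bexI[of _ q])
next
  fix e assume "e \<in> (\<Union>w\<in>addrs D. clique_edges K w \<union> parent_edges K w)"
  then obtain w where w: "w \<in> addrs D" "e \<in> clique_edges K w \<union> parent_edges K w" by blast
  show "e \<in> graph_edges K D"
  proof (cases "e \<in> clique_edges K w")
    case True
    then show ?thesis using w(1) unfolding clique_edges_def graph_edges_def vertices_def by auto
  next
    case False
    then obtain i where i: "w \<noteq> []" "i < K" "e = ((butlast w, i), (w, i))"
      using w(2) unfolding parent_edges_def by (auto split: if_splits)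
    then have "w = butlast w @ [last w]" by simp
    then have "butlast w \<in> addrs D" "last w < 3" using w(1) addrs_snoc by metis+
    then show ?thesis
      using w(1) i \<open>w = butlast w @ [last w]\<close> unfolding graph_edges_def vertices_def by force
  qed
qed

definition owner :: "var \<Rightarrow> nat list" where
  "owner y = (case from_nat y :: vertex + vertex \<times> vertex of Inl v \<Rightarrow> fst v | Inr e \<Rightarrow> fst (snd e))"

lemma owner_vertex_var [simp]: "owner (vertex_var v) = fst v"
  unfolding owner_def vertex_var_def by simp

lemma owner_edge_var [simp]: "owner (edge_var e) = fst (snd e)"
  unfolding owner_def edge_var_def by simp

text \<open>The edge variables come first, so that every suffix of this list that contains a clique edge
  variable contains all vertex variables of w.\<close>

definition node_leaves :: "nat \<Rightarrow> nat list \<Rightarrow> var list" where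
  "node_leaves K w = sorted_list_of_set (edge_var ` (clique_edges K w \<union> parent_edges K w)) @
     map (\<lambda>i. vertex_var (w, i)) [0..<K]"

lemma finite_owned_edges: "finite (clique_edges K w \<union> parent_edges K w)"
proof -
  have "clique_edges K w \<subseteq> (\<lambda>(i, j). ((w, i), (w, j))) ` ({..<K} \<times> {..<K})"
    unfolding clique_edges_def by auto
  moreover have "parent_edges K w \<subseteq> (\<lambda>i. ((butlast w, i), (w, i))) ` {..<K}"
    unfolding parent_edges_def by auto
  ultimately show ?thesis by (meson finite_SigmaI finite_UnI finite_imageI finite_lessThan finite_subset)
qed

lemma set_node_leaves:
  "set (node_leaves K w) = edge_var ` (clique_edges K w \<union> parent_edges K w) \<union> vertex_var ` ({w} \<times> {..<K})"
  unfolding node_leaves_def using finite_owned_edges by auto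

lemma distinct_node_leaves: "distinct (node_leaves K w)"
  unfolding node_leaves_def using finite_owned_edges by (auto simp: distinct_map inj_on_def)

lemma owner_node_leaves: "y \<in> set (node_leaves K w) \<Longrightarrow> owner y = w"
  unfolding set_node_leaves clique_edges_def parent_edges_def by (auto split: if_splits)

lemma node_leaves_ne: "1 \<le> K \<Longrightarrow> node_leaves K w \<noteq> []"
  unfolding node_leaves_def by simp

lemma graph_vars_eq_node_leaves:
  "vertex_var ` vertices K D \<union> edge_var ` graph_edges K D = (\<Union>w\<in>addrs D. set (node_leaves K w))"
  unfolding set_node_leaves graph_edges_eq_owned vertices_def by blast

lemma graph_var_in_node_leaves:
  "y \<in> vertex_var ` vertices K D \<union> edge_var ` graph_edges K D \<Longrightarrow> y \<in> set (node_leaves K (owner y))"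
  unfolding graph_vars_eq_node_leaves using owner_node_leaves by blast

fun comb_vtree :: "var list \<Rightarrow> vtree" where
  "comb_vtree [] = VLeaf 0"
| "comb_vtree [x] = VLeaf x"
| "comb_vtree (x # y # xs) = VNode (VLeaf x) (comb_vtree (y # xs))"

lemma vt_leaves_comb_vtree: "L \<noteq> [] \<Longrightarrow> vt_leaves (comb_vtree L) = L"
  by (induction L rule: comb_vtree.induct) auto

lemma vt_subtrees_comb_vtree:
  "t \<in> vt_subtrees (comb_vtree L) \<Longrightarrow> L \<noteq> [] \<Longrightarrow>
    (\<exists>k<length L. t = comb_vtree (drop k L)) \<or> (\<exists>x\<in>set L. t = VLeaf x)"
proof (induction L rule: comb_vtree.induct)
  case (3 x y xs)
  then consider "t = comb_vtree (x # y # xs)" | "t = VLeaf x" | "t \<in> vt_subtrees (comb_vtree (y # xs))"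
    by auto
  then show ?case
  proof cases
    case 1
    then show ?thesis by (intro disjI1 exI[of _ 0]) auto
  next
    case 3
    with "3.IH" consider k where "k < length (y # xs)" "t = comb_vtree (drop k (y # xs))"
      | "\<exists>x\<in>set (y # xs). t = VLeaf x" by blast
    then show ?thesis
    proof cases
      case (1 k)
      then show ?thesis by (intro disjI1 exI[of _ "Suc k"]) auto
    qed auto
  qed simp
qed auto

fun tree_vtree :: "nat \<Rightarrow> nat \<Rightarrow> nat list \<Rightarrow> vtree" where
  "tree_vtree K 0 w = comb_vtree (node_leaves K w)"
| "tree_vtree K (Suc r) w = VNode (comb_vtree (node_leaves K w))
     (VNode (tree_vtree K r (w @ [0])) (VNode (tree_vtree K r (w @ [1])) (tree_vtree K r (w @ [2]))))"

lemma vt_vars_tree_vtree: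
  assumes "1 \<le> K"
  shows "vt_vars (tree_vtree K r w) = (\<Union>u\<in>addrs r. set (node_leaves K (w @ u)))"
proof (induction r arbitrary: w)
  case 0
  then show ?case using vt_leaves_comb_vtree[OF node_leaves_ne[OF assms]] by (simp add: addrs_0)
next
  case (Suc r)
  have "vt_vars (tree_vtree K (Suc r) w) =
      set (node_leaves K w) \<union> (\<Union>a\<in>{0, 1, 2}. \<Union>u\<in>addrs r. set (node_leaves K (w @ a # u)))"
    using vt_leaves_comb_vtree[OF node_leaves_ne[OF assms]] Suc.IH by auto
  also have "\<dots> = (\<Union>u\<in>addrs (Suc r). set (node_leaves K (w @ u)))"
  proof -
    have "{0::nat, 1, 2} = {a. a < 3}" by auto
    then show ?thesis unfolding addrs_Suc by auto
  qed
  finally show ?case .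
qed

lemma distinct_vt_leaves_tree_vtree:
  assumes "1 \<le> K"
  shows "distinct (vt_leaves (tree_vtree K r w))"
proof (induction r arbitrary: w)
  case 0
  then show ?case using vt_leaves_comb_vtree[OF node_leaves_ne[OF assms]] distinct_node_leaves by simp
next
  case (Suc r)
  have owner_child: "\<exists>u. owner y = w @ a # u" if "y \<in> vt_vars (tree_vtree K r (w @ [a]))" for y a
    using that owner_node_leaves unfolding vt_vars_tree_vtree[OF assms] by fastforce
  have "vt_vars (tree_vtree K r (w @ [a])) \<inter> vt_vars (tree_vtree K r (w @ [b])) = {}" if "a \<noteq> b" for a b
  proof -
    have "w @ a # u \<noteq> w @ b # u'" for u u' using that by simp
    then show ?thesis using owner_child[of _ a] owner_child[of _ b] by (metis disjoint_iff)
  qed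
  moreover have "set (node_leaves K w) \<inter> vt_vars (tree_vtree K r (w @ [a])) = {}" for a
    using owner_child owner_node_leaves by fastforce
  ultimately show ?case using vt_leaves_comb_vtree[OF node_leaves_ne[OF assms]] distinct_node_leaves Suc.IH
    by (auto simp: Int_Un_distrib Int_Un_distrib2)
qed

lemma vtree_over_tree_vtree:
  assumes "2 \<le> K"
  shows "vtree_over (tree_vtree K D []) (cnf_vars (graph_cnf K D))"
  unfolding vtree_over_def cnf_vars_graph_cnf[OF assms] graph_vars_eq_node_leaves
  using vt_vars_tree_vtree[of K D "[]"] distinct_vt_leaves_tree_vtree[of K D "[]"] assms by simp

lemma mem_vt_vars_tree_vtree:
  assumes "1 \<le> K" "y \<in> vertex_var ` vertices K D \<union> edge_var ` graph_edges K D"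
  shows "y \<in> vt_vars (tree_vtree K r w) \<longleftrightarrow> owner y \<in> (@) w ` addrs r"
proof
  assume "y \<in> vt_vars (tree_vtree K r w)"
  then obtain u where "u \<in> addrs r" "y \<in> set (node_leaves K (w @ u))"
    unfolding vt_vars_tree_vtree[OF assms(1)] by blast
  then show "owner y \<in> (@) w ` addrs r" using owner_node_leaves by auto
next
  assume "owner y \<in> (@) w ` addrs r"
  then obtain u where "u \<in> addrs r" "owner y = w @ u" by auto
  then show "y \<in> vt_vars (tree_vtree K r w)"
    using graph_var_in_node_leaves[OF assms(2)] unfolding vt_vars_tree_vtree[OF assms(1)] by auto
qed

definition interface_vars :: "nat \<Rightarrow> nat list \<Rightarrow> var set" where
  "interface_vars K w = vertex_var ` ({w} \<times> {..<K}) \<union> edge_var ` parent_edges K w"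

lemma card_interface_vars: "card (interface_vars K w) \<le> 2 * K"
proof -
  have "card (vertex_var ` ({w} \<times> {..<K})) \<le> K"
    using card_image_le[of "{w} \<times> {..<K}" vertex_var] by (simp add: card_cartesian_product)
  moreover have "card (edge_var ` parent_edges K w) \<le> K"
  proof -
    have "parent_edges K w \<subseteq> (\<lambda>i. ((butlast w, i), (w, i))) ` {..<K}"
      unfolding parent_edges_def by auto
    then have "card (edge_var ` parent_edges K w) \<le> card ((\<lambda>i. edge_var ((butlast w, i), (w, i))) ` {..<K})"
      by (intro card_mono) auto
    also have "\<dots> \<le> K" using card_image_le[of "{..<K}"] by simp
    finally show ?thesis .
  qed
  ultimately show ?thesis
    using card_Un_le[of "vertex_var ` ({w} \<times> {..<K})" "edge_var ` parent_edges K w"]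
    unfolding interface_vars_def by linarith
qed

text \<open>The only clauses crossing the subtree below w are those of the edges between w and its parent;
  their variables inside the subtree are the edge variable and the vertex variable at w.\<close>

lemma boundary_tree_vtree:
  assumes K: "2 \<le> K" and D: "length w + r = D"
  shows "boundary (graph_cnf K D) (tree_vtree K r w) \<subseteq> interface_vars K w"
proof
  let ?t = "tree_vtree K r w" and ?S = "(@) w ` addrs r"
  fix x assume "x \<in> boundary (graph_cnf K D) ?t"
  then obtain C where x: "x \<in> vt_vars ?t" "C \<in> cut_clauses (graph_cnf K D) ?t" "x \<in> clause_vars C"
    unfolding boundary_def by blast
  then obtain p i q j where e: "((p, i), (q, j)) \<in> graph_edges K D" "C = edge_clause ((p, i), (q, j))"
    unfolding cut_clauses_def set_graph_cnf by auto
  then have vars: "clause_vars C = {vertex_var (p, i), vertex_var (q, j), edge_var ((p, i), (q, j))}"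
    unfolding edge_clause_def by auto
  have graph_var: "y \<in> vertex_var ` vertices K D \<union> edge_var ` graph_edges K D" if "y \<in> clause_vars C" for y
    using that e(1) unfolding vars graph_edges_def by auto
  have mem: "y \<in> vt_vars ?t \<longleftrightarrow> owner y \<in> ?S" if "y \<in> clause_vars C" for y
    using mem_vt_vars_tree_vtree[of K y D r w] K graph_var[OF that] by simp
  have "\<not> clause_vars C \<subseteq> vt_vars ?t" "clause_vars C \<inter> vt_vars ?t \<noteq> {}"
    using x(2) unfolding cut_clauses_def by auto
  then have cross: "(p \<in> ?S \<or> q \<in> ?S) \<and> (p \<notin> ?S \<or> q \<notin> ?S)"
    using mem unfolding vars by auto
  then obtain a where a: "i = j" "a < 3" "q = p @ [a]"
    using e(1) unfolding graph_edges_def by auto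
  have "p \<notin> ?S"
  proof
    assume "p \<in> ?S"
    then obtain u where u: "u \<in> addrs r" "p = w @ u" by auto
    have "length q \<le> D" using e(1) unfolding graph_edges_def vertices_def addrs_def by auto
    then have "u @ [a] \<in> addrs r" using u a D unfolding addrs_def by auto
    then show False using cross u a by auto
  qed
  with cross obtain u where u: "u \<in> addrs r" "q = w @ u" by auto
  have "u = []"
  proof (rule ccontr)
    assume "u \<noteq> []"
    then have "p = w @ butlast u" using u a by (metis butlast_append butlast_snoc)
    moreover have "butlast u \<in> addrs r" using u(1) by (auto simp: addrs_def dest: in_set_butlastD)
    ultimately show False using \<open>p \<notin> ?S\<close> by auto
  qed
  then have q: "q = w" using u by simp
  then have p: "p = butlast w" using a by (metis butlast_snoc)
  have "x \<noteq> vertex_var (p, i)" using x(1) mem[of "vertex_var (p, i)"] \<open>p \<notin> ?S\<close> vars by auto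
  then have "x = vertex_var (w, i) \<or> x = edge_var ((butlast w, i), (w, i))" using x(3) vars q p a by auto
  moreover have "w \<noteq> []" "i < K" using q a e(1) unfolding graph_edges_def vertices_def by auto
  ultimately show "x \<in> interface_vars K w" unfolding interface_vars_def parent_edges_def by auto
qed

lemma set_subset_drop_append: "y \<in> set (drop k (R @ S)) \<Longrightarrow> y \<notin> set S \<Longrightarrow> set S \<subseteq> set (drop k (R @ S))"
  by (cases "k \<le> length R") (auto dest: in_set_dropD)

lemma boundary_comb_vtree_node_leaves:
  assumes k: "k < length (node_leaves K w)"
  shows "boundary (graph_cnf K D) (comb_vtree (drop k (node_leaves K w))) \<subseteq> interface_vars K w"
proof
  let ?L = "drop k (node_leaves K w)"
  have leaves: "vt_vars (comb_vtree ?L) = set ?L" using vt_leaves_comb_vtree k by simp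
  fix x assume "x \<in> boundary (graph_cnf K D) (comb_vtree ?L)"
  then obtain C where x: "x \<in> set ?L" "C \<in> cut_clauses (graph_cnf K D) (comb_vtree ?L)" "x \<in> clause_vars C"
    unfolding boundary_def leaves by blast
  show "x \<in> interface_vars K w"
  proof (rule ccontr)
    assume not_interface: "x \<notin> interface_vars K w"
    have "x \<in> set (node_leaves K w)" using x(1) by (auto dest: in_set_dropD)
    then obtain i j where ij: "x = edge_var ((w, i), (w, j))" "i < j" "j < K"
      using not_interface unfolding set_node_leaves interface_vars_def clique_edges_def by auto
    obtain e where "C = edge_clause e" using x(2) unfolding cut_clauses_def set_graph_cnf by auto
    with x(3) ij(1) have C: "clause_vars C = {vertex_var (w, i), vertex_var (w, j), x}"
      unfolding edge_clause_def by auto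
    have "x \<notin> set (map (\<lambda>i. vertex_var (w, i)) [0..<K])" using ij(1) by auto
    then have "set (map (\<lambda>i. vertex_var (w, i)) [0..<K]) \<subseteq> set ?L"
      unfolding node_leaves_def by (rule set_subset_drop_append[OF x(1)[unfolded node_leaves_def]])
    then have "clause_vars C \<subseteq> vt_vars (comb_vtree ?L)" using C ij x(1) unfolding leaves by auto
    then show False using x(2) unfolding cut_clauses_def by blast
  qed
qed

lemma finite_interface_vars: "finite (interface_vars K w)"
  using finite_owned_edges[of K w] unfolding interface_vars_def by simp

lemma card_boundary_le_interface:
  assumes "boundary (graph_cnf K D) t \<subseteq> interface_vars K w"
  shows "card (boundary (graph_cnf K D) t) \<le> 2 * K"
  using card_mono[OF finite_interface_vars assms] card_interface_vars[of K w] by linarith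

lemma card_boundary_comb_vtree:
  assumes "2 \<le> K" "t \<in> vt_subtrees (comb_vtree (node_leaves K w))"
  shows "card (boundary (graph_cnf K D) t) \<le> 2 * K"
proof -
  have "node_leaves K w \<noteq> []" using assms(1) node_leaves_ne by simp
  from vt_subtrees_comb_vtree[OF assms(2) this] show ?thesis
  proof (elim disjE exE bexE conjE)
    fix k assume "k < length (node_leaves K w)" "t = comb_vtree (drop k (node_leaves K w))"
    then show ?thesis using boundary_comb_vtree_node_leaves card_boundary_le_interface by blast
  next
    fix y assume "t = VLeaf y"
    then have "card (boundary (graph_cnf K D) t) \<le> card {y}"
      using boundary_subset[of "graph_cnf K D" t] by (intro card_mono) auto
    then show ?thesis using assms(1) by simp
  qed
qed

lemma card_boundary_tree_vtree:
  assumes K: "2 \<le> K"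
  shows "length w + r = D \<Longrightarrow> t \<in> vt_subtrees (tree_vtree K r w) \<Longrightarrow>
    card (boundary (graph_cnf K D) t) \<le> 6 * K"
proof (induction r arbitrary: w)
  case 0
  then have "card (boundary (graph_cnf K D) t) \<le> 2 * K" using card_boundary_comb_vtree[OF K] by simp
  then show ?case by simp
next
  case (Suc r)
  let ?T = "\<lambda>a. tree_vtree K r (w @ [a])" and ?b = "\<lambda>t. card (boundary (graph_cnf K D) t)"
  have child: "?b (?T a) \<le> 2 * K" for a
    using boundary_tree_vtree[OF K, of "w @ [a]" r D] Suc.prems(1) card_boundary_le_interface by simp
  have "?b (VNode (?T 1) (?T 2)) \<le> 4 * K"
    using card_boundary_VNode[of "graph_cnf K D" "?T 1" "?T 2"] child[of 1] child[of 2] by simp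
  moreover have "?b (VNode (?T 0) (VNode (?T 1) (?T 2))) \<le> 6 * K"
    using card_boundary_VNode[of "graph_cnf K D" "?T 0" "VNode (?T 1) (?T 2)"] child[of 0] calculation
    by linarith
  moreover have "?b (tree_vtree K (Suc r) w) \<le> 2 * K"
    using boundary_tree_vtree[OF K Suc.prems(1)] card_boundary_le_interface by blast
  moreover have "t \<in> vt_subtrees (?T a) \<Longrightarrow> ?b t \<le> 6 * K" for a
    using Suc.IH[of "w @ [a]"] Suc.prems(1) by simp
  moreover have "t \<in> vt_subtrees (comb_vtree (node_leaves K w)) \<Longrightarrow> ?b t \<le> 6 * K"
    using card_boundary_comb_vtree[OF K, of t w D] by simp
  ultimately show ?case using Suc.prems(2) by auto
qed

lemma card_vt_subtrees_tree_vtree: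
  assumes K: "2 \<le> K"
  shows "card (vt_subtrees (tree_vtree K D [])) \<le> 4 * (K * ((D + 1) * 3 ^ D)) ^ 2"
proof -
  let ?N = "K * ((D + 1) * 3 ^ D)" and ?V = "vertices K D"
  have "length (vt_leaves (tree_vtree K D [])) = card (cnf_vars (graph_cnf K D))"
    using vtree_over_tree_vtree[OF K] unfolding vtree_over_def by (metis distinct_card)
  also have "\<dots> \<le> card (vertex_var ` ?V) + card (edge_var ` graph_edges K D)"
    unfolding cnf_vars_graph_cnf[OF K] by (rule card_Un_le)
  also have "\<dots> \<le> card ?V + card (?V \<times> ?V)"
  proof (intro add_mono)
    show "card (vertex_var ` ?V) \<le> card ?V" by (rule card_image_le[OF finite_vertices])
    have "graph_edges K D \<subseteq> ?V \<times> ?V" unfolding graph_edges_def by auto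
    then show "card (edge_var ` graph_edges K D) \<le> card (?V \<times> ?V)"
      using card_image_le[OF finite_graph_edges] card_mono finite_vertices
      by (meson finite_SigmaI le_trans)
  qed
  also have "\<dots> \<le> ?N + ?N * ?N"
    using card_vertices[of K D] by (simp add: card_cartesian_product add_mono mult_le_mono)
  also have "\<dots> \<le> 2 * ?N ^ 2" by (cases ?N) (simp_all add: power2_eq_square)
  finally show ?thesis using card_vt_subtrees[of "tree_vtree K D []"] by linarith
qed

theorem graph_cnf_tdd:
  assumes K: "2 \<le> K"
  shows "\<exists>T C. vtree_over T (cnf_vars (graph_cnf K D)) \<and> is_tdd C T \<and>
    (\<forall>\<tau>. tdd_computes C T \<tau> \<longleftrightarrow> cnf_sem (graph_cnf K D) \<tau>) \<and>
    tdd_size C \<le> 4 * (K * ((D + 1) * 3 ^ D)) ^ 2 * 2 ^ (18 * K)"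
proof -
  let ?T = "tree_vtree K D []"
  have over: "vtree_over ?T (cnf_vars (graph_cnf K D))" by (rule vtree_over_tree_vtree[OF K])
  have "card (boundary (graph_cnf K D) t) \<le> 6 * K" if "t \<in> vt_subtrees ?T" for t
    using card_boundary_tree_vtree[OF K _ that] by simp
  note canonical = canonical_tdd[OF over[unfolded vtree_over_def, THEN conjunct2] this]
  have "tdd_size (canonical_tdd (graph_cnf K D) ?T) \<le> 4 * (K * ((D + 1) * 3 ^ D)) ^ 2 * 2 ^ (18 * K)"
    using le_trans[OF canonical(3) mult_le_mono1[OF card_vt_subtrees_tree_vtree[OF K]]]
    by (simp add: mult.assoc)
  then show ?thesis using over canonical(1,2) by blast
qed

section \<open>The family of formulas\<close>

lemma tdd_size_bound_poly:
  fixes l N :: nat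
  assumes "2 ^ l \<le> N"
  shows "4 * (2 * (l + 1) * ((l + 1) * 3 ^ l)) ^ 2 * 2 ^ (18 * (2 * (l + 1))) \<le> 2 ^ 40 * N ^ 44"
proof -
  have l: "l + 1 \<le> N" using assms less_exp[of l] by linarith
  have "(3::nat) ^ l \<le> 4 ^ l" by (rule power_mono) auto
  also have "\<dots> = (2 ^ l) ^ 2" by (simp add: power2_eq_square power_mult_distrib[symmetric])
  also have "\<dots> \<le> N ^ 2" using assms by (rule power_mono) simp
  finally have three: "(3::nat) ^ l \<le> N ^ 2" .
  have "(2::nat) ^ (18 * (2 * (l + 1))) = 2 ^ 36 * (2 ^ l) ^ 36"
    by (simp add: power_add power_mult[symmetric] algebra_simps)
  also have "\<dots> \<le> 2 ^ 36 * N ^ 36" using assms by (intro mult_le_mono2 power_mono) auto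
  finally have two: "(2::nat) ^ (18 * (2 * (l + 1))) \<le> 2 ^ 36 * N ^ 36" .
  have "2 * (l + 1) * ((l + 1) * 3 ^ l) \<le> 2 * N * (N * N ^ 2)"
    by (rule mult_le_mono[OF mult_le_mono2[OF l] mult_le_mono[OF l three]])
  then have "4 * (2 * (l + 1) * ((l + 1) * 3 ^ l)) ^ 2 * 2 ^ (18 * (2 * (l + 1))) \<le>
      4 * (2 * N * (N * N ^ 2)) ^ 2 * (2 ^ 36 * N ^ 36)"
    by (rule mult_le_mono[OF mult_le_mono2[OF power_mono[OF _ zero_le]] two])
  also have "\<dots> = 2 ^ 40 * N ^ 44" by algebra
  finally show ?thesis .
qed

lemma add_one_power_le: "(n + 1) ^ k \<le> 2 ^ k * (n ^ k + 1 :: nat)"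
proof (cases "n = 0")
  case False
  then have "(n + 1) ^ k \<le> (2 * n) ^ k" by (intro power_mono) auto
  then show ?thesis by (simp add: power_mult_distrib)
next
  case True
  then show ?thesis by (simp add: trans_le_add1)
qed

lemma powr_log_le_floor_log:
  assumes n: "2 \<le> n"
  shows "real n powr (1 / 2 * log 2 (real n)) \<le> 2 ^ ((floor_log n + 1) * floor_log n)"
proof -
  let ?l = "floor_log n" and ?L = "log 2 (real n)"
  have l: "1 \<le> real ?l" using floor_log_rec[OF n] by simp
  have "n < 2 ^ (?l + 1)" using floor_log_exp2_gt[of n] by simp
  then have "real n < 2 ^ (?l + 1)" by (metis of_nat_less_iff of_nat_numeral of_nat_power)
  then have "?L < log 2 (2 ^ (?l + 1))" using n by (intro log_less) auto
  moreover have "log 2 ((2::real) ^ (?l + 1)) = real ?l + 1" by (subst log_pow_cancel) auto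
  ultimately have "?L < real ?l + 1" by linarith
  moreover have "0 \<le> ?L" using n by simp
  ultimately have "?L * (1 / 2 * ?L) \<le> (real ?l + 1) * (1 / 2 * (real ?l + 1))"
    by (intro mult_mono) auto
  also have "\<dots> \<le> real ((?l + 1) * ?l)"
    using l mult_mono[OF l l] by (simp add: algebra_simps)
  finally have exponent: "?L * (1 / 2 * ?L) \<le> real ((?l + 1) * ?l)" .
  have "real n powr (1 / 2 * ?L) = (2 powr ?L) powr (1 / 2 * ?L)"
    using n by simp
  also have "\<dots> = 2 powr (?L * (1 / 2 * ?L))" by (rule powr_powr)
  also have "\<dots> \<le> 2 powr real ((?l + 1) * ?l)" using exponent by (rule powr_mono) simp
  also have "\<dots> = 2 ^ ((?l + 1) * ?l)" by (rule powr_realpow) simp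
  finally show ?thesis .
qed

text \<open>With \<ell> = \<lfloor>log n\<rfloor>, the choice K = 2(\<ell> + 1) and D = \<ell> gives polynomially many
  vertices and boundaries of logarithmic size, while the crossing matchings have size (\<ell> + 1) \<ell>.\<close>

definition hard_cnf :: "nat \<Rightarrow> cnf" where
  "hard_cnf n = graph_cnf (2 * (floor_log n + 1)) (floor_log n)"

lemma hard_cnf_tdd_poly_size:
  "\<exists>T C. vtree_over T (cnf_vars (hard_cnf n)) \<and> is_tdd C T \<and>
     (\<forall>\<tau>. tdd_computes C T \<tau> \<longleftrightarrow> cnf_sem (hard_cnf n) \<tau>) \<and> tdd_size C \<le> 2 ^ 84 * n ^ 44 + 2 ^ 84"
proof -
  let ?l = "floor_log n"
  obtain T C where TC: "vtree_over T (cnf_vars (hard_cnf n))" "is_tdd C T"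
      "\<forall>\<tau>. tdd_computes C T \<tau> \<longleftrightarrow> cnf_sem (hard_cnf n) \<tau>"
      "tdd_size C \<le> 4 * (2 * (?l + 1) * ((?l + 1) * 3 ^ ?l)) ^ 2 * 2 ^ (18 * (2 * (?l + 1)))"
    using graph_cnf_tdd[of "2 * (?l + 1)" ?l] unfolding hard_cnf_def by auto
  have "2 ^ ?l \<le> n + 1" using floor_log_exp2_le[of n] by (cases "n = 0") auto
  then have "tdd_size C \<le> 2 ^ 40 * (n + 1) ^ 44"
    using TC(4) tdd_size_bound_poly le_trans by blast
  also have "\<dots> \<le> 2 ^ 40 * (2 ^ 44 * (n ^ 44 + 1))" by (rule mult_le_mono2[OF add_one_power_le])
  also have "\<dots> = 2 ^ 84 * n ^ 44 + 2 ^ 84" by simp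
  finally show ?thesis using TC by blast
qed

lemma hard_cnf_obdd_size:
  assumes "2 \<le> n" "is_obdd B (cnf_vars (hard_cnf n))"
    and "\<And>\<tau>. obdd_accepts B \<tau> \<longleftrightarrow> cnf_sem (hard_cnf n) \<tau>"
  shows "real n powr (1 / 2 * log 2 (real n)) \<le> real (obdd_size B)"
proof -
  have "2 ^ ((floor_log n + 1) * floor_log n) \<le> obdd_size B"
    using graph_cnf_obdd_size[of B "floor_log n + 1" "floor_log n"] assms unfolding hard_cnf_def by simp
  then have "(2::real) ^ ((floor_log n + 1) * floor_log n) \<le> real (obdd_size B)"
    by (metis of_nat_le_iff of_nat_numeral of_nat_power)
  then show ?thesis using powr_log_le_floor_log[OF assms(1)] by linarith
qed

theorem theorem18:
  "\<exists>F :: nat \<Rightarrow> cnf.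
     (\<exists>a d :: nat. \<forall>n. \<exists>T C. vtree_over T (cnf_vars (F n)) \<and> is_tdd C T \<and>
         (\<forall>\<tau>. tdd_computes C T \<tau> \<longleftrightarrow> cnf_sem (F n) \<tau>) \<and>
         tdd_size C \<le> a * n ^ d + a) \<and>
     (\<exists>c :: real. c > 0 \<and>
        (\<forall>\<^sub>F n in sequentially. \<forall>B. is_obdd B (cnf_vars (F n)) \<and>
            (\<forall>\<tau>. obdd_accepts B \<tau> \<longleftrightarrow> cnf_sem (F n) \<tau>) \<longrightarrow>
            real (obdd_size B) \<ge> real n powr (c * log 2 (real n))))"
proof (intro exI conjI)
  show "\<forall>n. \<exists>T C. vtree_over T (cnf_vars (hard_cnf n)) \<and> is_tdd C T \<and>
      (\<forall>\<tau>. tdd_computes C T \<tau> \<longleftrightarrow> cnf_sem (hard_cnf n) \<tau>) \<and> tdd_size C \<le> 2 ^ 84 * n ^ 44 + 2 ^ 84"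
    using hard_cnf_tdd_poly_size by blast
  show "\<forall>\<^sub>F n in sequentially. \<forall>B. is_obdd B (cnf_vars (hard_cnf n)) \<and>
      (\<forall>\<tau>. obdd_accepts B \<tau> \<longleftrightarrow> cnf_sem (hard_cnf n) \<tau>) \<longrightarrow>
      real (obdd_size B) \<ge> real n powr (1 / 2 * log 2 (real n))"
    using hard_cnf_obdd_size unfolding eventually_sequentially by blast
qed simp

end
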